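(* Let $V\subseteq\mathcal V$ be finite, $\mathcal E\in\mathit{DProg}(V)$, $W\subseteq\mathcal V$ finite and $P,Q$ projectors on $\mathcal H_W$. Then: (1) $sp^p.\mathcal E.(wlp^p.\mathcal E.Q)\sqsubseteq Q$ and $P\sqsubseteq wlp^p.\mathcal E.(sp^p.\mathcal E.P)$; (2) $wp^p.\mathcal E.Q=wlp^p.\mathcal E.Q\wedge wp^p.\mathcal E.I_W$; (3) $sp^p.\mathcal E.(wp^p.\mathcal E.Q)\sqsubseteq Q$, and if $P\sqsubseteq wp^p.\mathcal E.I_W$ then $P\sqsubseteq wp^p.\mathcal E.(sp^p.\mathcal E.P)$.
   Context: $\mathcal V$ is a countably infinite set of qubit variables; $\mathcal H_V=\bigotimes_{q\in V}\mathcal H_q$. $\mathcal D(\mathcal H)$: partial density operators; projectors are identified with their image subspaces, ordered by inclusion $\sqsubseteq$, with $\wedge$ = intersection. $\mathit{DProg}(V)$: completely positive trace-nonincreasing super-operators on $\mathcal L(\mathcal H_V)$. Convention: operators and super-operators are implicitly extended to $\mathcal H_{V\cup W}$ (and larger systems) by tensoring with identities; all projectors are regarded on $\mathcal H_{V\cup W}$. For projectors $P,Q$: $\mathcal E\models_{tot}(P,Q)$ iff for all finite $X\supseteq V\cup W$ and $\rho\in\mathcal D(\mathcal H_X)$, ${\rm tr}(P\rho)\le{\rm tr}(Q\mathcal E(\rho))$; $\mathcal E\models_{par}(P,Q)$ iff for all such $X,\rho$, ${\rm tr}(P\rho)\le{\rm tr}(Q\mathcal E(\rho))+{\rm tr}(\rho)-{\rm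 tr}(\mathcal E(\rho))$. $wp^p.\mathcal E.Q$ is the largest projector $P$ with $\mathcal E\models_{tot}(P,Q)$; $wlp^p.\mathcal E.Q$ the largest projector $P$ with $\mathcal E\models_{par}(P,Q)$; $sp^p.\mathcal E.Q$ the smallest projector $R$ with $\mathcal E\models_{par}(Q,R)$. *)

theory Defs
  imports Complex_Main
begin

(* Qubit variables: nat (countably infinite).
   A computational basis state of H_X (X finite) is an assignment X -> bool,
   represented canonically as a function nat => bool that is False outside X. *)
type_synonym qvar = nat
type_synonym bstate = "qvar \<Rightarrow> bool"
type_synonym op = "bstate \<Rightarrow> bstate \<Rightarrow> complex"   (* matrix entries <f|A|g> *)
type_synonym vec = "bstate \<Rightarrow> complex"
type_synonym superop = "op \<Rightarrow> op"

definition basis :: "qvar set \<Rightarrow> bstate set" where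
  "basis X = {f. \<forall>q. q \<notin> X \<longrightarrow> \<not> f q}"

definition restr :: "qvar set \<Rightarrow> bstate \<Rightarrow> bstate" where
  "restr U f = (\<lambda>q. q \<in> U \<and> f q)"

definition agree :: "qvar set \<Rightarrow> bstate \<Rightarrow> bstate \<Rightarrow> bool" where
  "agree S f g = (\<forall>q\<in>S. f q = g q)"

definition in_L :: "qvar set \<Rightarrow> op \<Rightarrow> bool" where
  "in_L X A = (\<forall>f g. f \<notin> basis X \<or> g \<notin> basis X \<longrightarrow> A f g = 0)"

definition supp_vec :: "qvar set \<Rightarrow> vec \<Rightarrow> bool" where
  "supp_vec X v = (\<forall>f. f \<notin> basis X \<longrightarrow> v f = 0)"

definition mult :: "qvar set \<Rightarrow> op \<Rightarrow> op \<Rightarrow> op" where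
  "mult X A B = (\<lambda>f g. if f \<in> basis X \<and> g \<in> basis X
                       then \<Sum>h\<in>basis X. A f h * B h g else 0)"

definition apply_op :: "qvar set \<Rightarrow> op \<Rightarrow> vec \<Rightarrow> vec" where
  "apply_op X A v = (\<lambda>f. if f \<in> basis X then \<Sum>g\<in>basis X. A f g * v g else 0)"

definition tr :: "qvar set \<Rightarrow> op \<Rightarrow> complex" where
  "tr X A = (\<Sum>f\<in>basis X. A f f)"

definition idop :: "qvar set \<Rightarrow> op" where
  "idop X = (\<lambda>f g. if f \<in> basis X \<and> g \<in> basis X \<and> f = g then 1 else 0)"

definition psd :: "qvar set \<Rightarrow> op \<Rightarrow> bool" where
  "psd X A = (in_L X A \<and>
     (\<forall>v::vec. Im (\<Sum>f\<in>basis X. \<Sum>g\<in>basis X. cnj (v f) * A f g * v g) = 0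
            \<and> 0 \<le> Re (\<Sum>f\<in>basis X. \<Sum>g\<in>basis X. cnj (v f) * A f g * v g)))"

definition dens :: "qvar set \<Rightarrow> op \<Rightarrow> bool" where
  "dens X \<rho> = (psd X \<rho> \<and> Re (tr X \<rho>) \<le> 1)"

definition is_proj :: "qvar set \<Rightarrow> op \<Rightarrow> bool" where
  "is_proj X P = (in_L X P \<and> mult X P P = P \<and> (\<forall>f g. P f g = cnj (P g f)))"

definition img :: "qvar set \<Rightarrow> op \<Rightarrow> vec set" where
  "img X P = {v. supp_vec X v \<and> apply_op X P v = v}"

definition pleq :: "qvar set \<Rightarrow> op \<Rightarrow> op \<Rightarrow> bool" where
  "pleq X P Q = (img X P \<subseteq> img X Q)"

definition pmeet :: "qvar set \<Rightarrow> op \<Rightarrow> op \<Rightarrow> op" where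
  "pmeet X P Q = (THE R. is_proj X R \<and> img X R = img X P \<inter> img X Q)"

(* cylindrical extension A \<otimes> I of an operator on H_U to H_X (U \<subseteq> X) *)
definition ext :: "qvar set \<Rightarrow> qvar set \<Rightarrow> op \<Rightarrow> op" where
  "ext U X A = (\<lambda>f g. if f \<in> basis X \<and> g \<in> basis X \<and> agree (X - U) f g
                      then A (restr U f) (restr U g) else 0)"

definition unit_op :: "bstate \<Rightarrow> bstate \<Rightarrow> op" where
  "unit_op a b = (\<lambda>f g. if f = a \<and> g = b then 1 else 0)"

(* extension E \<otimes> id of a super-operator on L(H_V) to L(H_X) (V \<subseteq> X),
   defined on matrix units |f'><g'| = |f'_V><g'_V| \<otimes> |f'_R><g'_R| and linearly extended *)
definition ext_so :: "qvar set \<Rightarrow> qvar set \<Rightarrow> superop \<Rightarrow> op \<Rightarrow> op" where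
  "ext_so V X E \<rho> = (\<lambda>f g. if f \<in> basis X \<and> g \<in> basis X then
      (\<Sum>f'\<in>basis X. \<Sum>g'\<in>basis X.
          if agree (X - V) f f' \<and> agree (X - V) g g'
          then \<rho> f' g' * E (unit_op (restr V f') (restr V g')) (restr V f) (restr V g)
          else 0)
      else 0)"

(* DProg(V): completely positive, trace-nonincreasing super-operators on L(H_V) *)
definition DProg :: "qvar set \<Rightarrow> superop \<Rightarrow> bool" where
  "DProg V E = (
     (\<forall>A. in_L V A \<longrightarrow> in_L V (E A)) \<and>
     (\<forall>A B c. in_L V A \<longrightarrow> in_L V B \<longrightarrow>
         E (\<lambda>f g. c * A f g + B f g) = (\<lambda>f g. c * E A f g + E B f g)) \<and>
     (\<forall>X. finite X \<longrightarrow> V \<subseteq> X \<longrightarrow> (\<forall>\<rho>. psd X \<rho> \<longrightarrow> psd X (ext_so V X E \<rho>))) \<and>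
     (\<forall>\<rho>. psd V \<rho> \<longrightarrow> Re (tr V (E \<rho>)) \<le> Re (tr V \<rho>)))"

definition sat_tot :: "qvar set \<Rightarrow> qvar set \<Rightarrow> superop \<Rightarrow> op \<Rightarrow> op \<Rightarrow> bool" where
  "sat_tot V U E P Q = (\<forall>X \<rho>. finite X \<longrightarrow> V \<union> U \<subseteq> X \<longrightarrow> dens X \<rho> \<longrightarrow>
      Re (tr X (mult X (ext U X P) \<rho>)) \<le> Re (tr X (mult X (ext U X Q) (ext_so V X E \<rho>))))"

definition sat_par :: "qvar set \<Rightarrow> qvar set \<Rightarrow> superop \<Rightarrow> op \<Rightarrow> op \<Rightarrow> bool" where
  "sat_par V U E P Q = (\<forall>X \<rho>. finite X \<longrightarrow> V \<union> U \<subseteq> X \<longrightarrow> dens X \<rho> \<longrightarrow>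
      Re (tr X (mult X (ext U X P) \<rho>)) \<le> Re (tr X (mult X (ext U X Q) (ext_so V X E \<rho>)))
         + Re (tr X \<rho>) - Re (tr X (ext_so V X E \<rho>)))"

definition wp :: "qvar set \<Rightarrow> qvar set \<Rightarrow> superop \<Rightarrow> op \<Rightarrow> op" where
  "wp V U E Q = (THE P. is_proj (V \<union> U) P \<and> sat_tot V (V \<union> U) E P (ext U (V \<union> U) Q) \<and>
      (\<forall>P'. is_proj (V \<union> U) P' \<and> sat_tot V (V \<union> U) E P' (ext U (V \<union> U) Q)
            \<longrightarrow> pleq (V \<union> U) P' P))"

definition wlp :: "qvar set \<Rightarrow> qvar set \<Rightarrow> superop \<Rightarrow> op \<Rightarrow> op" where
  "wlp V U E Q = (THE P. is_proj (V \<union> U) P \<and> sat_par V (V \<union> U) E P (ext U (V \<union> U) Q) \<and>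
      (\<forall>P'. is_proj (V \<union> U) P' \<and> sat_par V (V \<union> U) E P' (ext U (V \<union> U) Q)
            \<longrightarrow> pleq (V \<union> U) P' P))"

definition sp :: "qvar set \<Rightarrow> qvar set \<Rightarrow> superop \<Rightarrow> op \<Rightarrow> op" where
  "sp V U E Q = (THE R. is_proj (V \<union> U) R \<and> sat_par V (V \<union> U) E (ext U (V \<union> U) Q) R \<and>
      (\<forall>R'. is_proj (V \<union> U) R' \<and> sat_par V (V \<union> U) E (ext U (V \<union> U) Q) R'
            \<longrightarrow> pleq (V \<union> U) R R'))"

end

(*
  Everything is moved to the Heisenberg picture.  For a register S containing V let E*(Q) be
  the dual of the program on H_S, so that tr (Q E(rho)) = tr (E*(Q) rho), and let
  E*_lib(Q) = E*(Q) + I - E*(I), which accounts for nontermination.  Both are effects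
  0 <= M <= I, and for an effect <v|M|v> = <v|v> holds iff M v = v.  Hence a correctness
  formula with precondition P holds totally (partially) iff every vector of P is fixed by
  E*(Q) (by E*_lib(Q)): necessity by testing the pure states |v><v|, sufficiency because
  M P = P gives M = P + (I - P) M (I - P).  So wp Q and wlp Q are the projectors onto these
  fixed spaces, and sp P, the complement of the common kernel of the output states
  E(|v><v|) for v in P, satisfies sp P <= R iff P <= wlp R.  The fixed space of E*(Q) is
  that of E*_lib(Q) intersected with that of E*(I), which is (2); (1) and (3) follow from
  the Galois connection between sp and wlp.
*)

theory Submission
  imports Defs "HOL-Library.Complex_Order"
begin

section \<open>Basis states of composite registers\<close>

text \<open>For \<open>s \<in> basis S\<close> and \<open>r \<in> basis (X - S)\<close>, \<open>join s r\<close> is the basis state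
  \<open>|s\<rangle> \<otimes> |r\<rangle>\<close> of \<open>H\<^sub>X\<close>.\<close>

definition join :: "bstate \<Rightarrow> bstate \<Rightarrow> bstate" where
  "join a r = (\<lambda>q. a q \<or> r q)"

lemma basis_iff: "f \<in> basis X \<longleftrightarrow> (\<forall>q. f q \<longrightarrow> q \<in> X)"
  unfolding basis_def by auto

lemma finite_basis: "finite X \<Longrightarrow> finite (basis X)"
proof -
  assume "finite X"
  have "basis X \<subseteq> (\<lambda>Y q. q \<in> Y) ` Pow X"
  proof
    fix f assume "f \<in> basis X"
    then have "f = (\<lambda>q. q \<in> {q. f q})" and "{q. f q} \<subseteq> X" by (auto simp: basis_iff)
    then show "f \<in> (\<lambda>Y q. q \<in> Y) ` Pow X" by blast
  qed
  then show ?thesis using \<open>finite X\<close> by (meson finite_Pow_iff finite_imageI finite_subset)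
qed

lemma restr_in_basis [simp]: "restr U f \<in> basis U"
  unfolding restr_def basis_iff by auto

lemma restr_id: "f \<in> basis U \<Longrightarrow> restr U f = f"
  unfolding restr_def basis_iff by auto

lemma join_in_basis: "S \<subseteq> X \<Longrightarrow> s \<in> basis S \<Longrightarrow> r \<in> basis (X - S) \<Longrightarrow> join s r \<in> basis X"
  unfolding join_def basis_iff by auto

lemma restr_join_left: "s \<in> basis S \<Longrightarrow> r \<in> basis (X - S) \<Longrightarrow> restr S (join s r) = s"
  unfolding join_def basis_iff restr_def by (rule ext) auto

lemma restr_join_right: "s \<in> basis S \<Longrightarrow> r \<in> basis (X - S) \<Longrightarrow> restr (X - S) (join s r) = r"
  unfolding join_def basis_iff restr_def by (rule ext) auto

lemma restr_join_subset:
  "V \<subseteq> S \<Longrightarrow> s \<in> basis S \<Longrightarrow> r \<in> basis (X - S) \<Longrightarrow> restr V (join s r) = restr V s"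
  unfolding restr_def join_def basis_iff by (auto simp: fun_eq_iff)

lemma join_restr: "S \<subseteq> X \<Longrightarrow> f \<in> basis X \<Longrightarrow> join (restr S f) (restr (X - S) f) = f"
  unfolding join_def basis_iff restr_def by (rule ext) auto

lemma join_eq_iff:
  "s \<in> basis S \<Longrightarrow> t \<in> basis S \<Longrightarrow> r \<in> basis (X - S) \<Longrightarrow> r' \<in> basis (X - S) \<Longrightarrow>
    join s r = join t r' \<longleftrightarrow> s = t \<and> r = r'"
  by (metis restr_join_left restr_join_right)

lemma agree_join:
  "s \<in> basis S \<Longrightarrow> t \<in> basis S \<Longrightarrow> r \<in> basis (X - S) \<Longrightarrow> r' \<in> basis (X - S) \<Longrightarrow>
    agree (X - S) (join s r) (join t r') \<longleftrightarrow> r = r'"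
  unfolding agree_def join_def basis_iff by (auto simp: fun_eq_iff) (metis DiffI)+

lemma agree_join_subset:
  assumes "V \<subseteq> S" "S \<subseteq> X" "s \<in> basis S" "t \<in> basis S" "r \<in> basis (X - S)" "r' \<in> basis (X - S)"
  shows "agree (X - V) (join s r) (join t r') \<longleftrightarrow> agree (S - V) s t \<and> r = r'"
  using assms unfolding agree_def join_def basis_iff by (auto simp: fun_eq_iff) (metis DiffI subsetD)+

lemma sum_basis_split:
  assumes "S \<subseteq> X"
  shows "(\<Sum>f\<in>basis X. G f) = (\<Sum>s\<in>basis S. \<Sum>r\<in>basis (X - S). G (join s r))"
proof -
  have "bij_betw (\<lambda>(s, r). join s r) (basis S \<times> basis (X - S)) (basis X)"
    by (rule bij_betw_byWitness[where f'="\<lambda>f. (restr S f, restr (X - S) f)"])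
      (use assms in \<open>auto simp: restr_join_left restr_join_right join_restr join_in_basis\<close>)
  then have "(\<Sum>f\<in>basis X. G f) = (\<Sum>(s, r)\<in>basis S \<times> basis (X - S). G (join s r))"
    by (simp add: sum.reindex_bij_betw[symmetric] split_def)
  also have "\<dots> = (\<Sum>s\<in>basis S. \<Sum>r\<in>basis (X - S). G (join s r))"
    by (simp add: sum.cartesian_product)
  finally show ?thesis .
qed


section \<open>Matrix calculus on \<open>H\<^sub>X\<close>\<close>

definition adj :: "op \<Rightarrow> op" where
  "adj A = (\<lambda>f g. cnj (A g f))"

definition inprod :: "qvar set \<Rightarrow> vec \<Rightarrow> vec \<Rightarrow> complex" where
  "inprod X u v = (\<Sum>f\<in>basis X. cnj (u f) * v f)"

definition qform :: "qvar set \<Rightarrow> op \<Rightarrow> vec \<Rightarrow> vec \<Rightarrow> complex" where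
  "qform X C u w = (\<Sum>a\<in>basis X. \<Sum>b\<in>basis X. cnj (u a) * C a b * w b)"

definition ket :: "bstate \<Rightarrow> vec" where
  "ket f = (\<lambda>h. if h = f then 1 else 0)"

definition outer :: "qvar set \<Rightarrow> vec \<Rightarrow> vec \<Rightarrow> op" where
  "outer X u w = (\<lambda>f g. if f \<in> basis X \<and> g \<in> basis X then u f * cnj (w g) else 0)"

definition col :: "op \<Rightarrow> bstate \<Rightarrow> vec" where
  "col A g = (\<lambda>f. A f g)"

definition id_minus :: "qvar set \<Rightarrow> op \<Rightarrow> op" where
  "id_minus X P = (\<lambda>f g. idop X f g - P f g)"

lemma in_L_vanish_left: "in_L X A \<Longrightarrow> f \<notin> basis X \<Longrightarrow> A f g = 0"
  unfolding in_L_def by auto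

lemma in_L_vanish_right: "in_L X A \<Longrightarrow> g \<notin> basis X \<Longrightarrow> A f g = 0"
  unfolding in_L_def by auto

lemma mult_in: "f \<in> basis X \<Longrightarrow> g \<in> basis X \<Longrightarrow> mult X A B f g = (\<Sum>h\<in>basis X. A f h * B h g)"
  unfolding mult_def by simp

lemma mult_out: "\<not> (f \<in> basis X \<and> g \<in> basis X) \<Longrightarrow> mult X A B f g = 0"
  unfolding mult_def by auto

lemma mult_in_L [simp]: "in_L X (mult X A B)"
  unfolding in_L_def mult_def by auto

lemma idop_in_L [simp]: "in_L X (idop X)"
  unfolding in_L_def idop_def by auto

lemma id_minus_in_L: "in_L X M \<Longrightarrow> in_L X (id_minus X M)"
  unfolding in_L_def id_minus_def idop_def by auto

lemma id_minus_id_minus: "in_L X A \<Longrightarrow> id_minus X (id_minus X A) = A"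
  unfolding id_minus_def by (intro ext) (auto simp: idop_def in_L_vanish_left in_L_vanish_right)

lemma outer_in_L: "in_L X (outer X u w)"
  unfolding in_L_def outer_def by auto

lemma mult_assoc: "mult X (mult X A B) C = mult X A (mult X B C)"
proof (intro ext)
  fix f g
  show "mult X (mult X A B) C f g = mult X A (mult X B C) f g"
  proof (cases "f \<in> basis X \<and> g \<in> basis X")
    case True
    have "mult X (mult X A B) C f g = (\<Sum>h\<in>basis X. \<Sum>k\<in>basis X. A f k * B k h * C h g)"
      using True by (simp add: mult_in sum_distrib_right)
    also have "\<dots> = (\<Sum>k\<in>basis X. \<Sum>h\<in>basis X. A f k * B k h * C h g)"
      by (rule sum.swap)
    also have "\<dots> = mult X A (mult X B C) f g"
      using True by (simp add: mult_in sum_distrib_left mult.assoc)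
    finally show ?thesis .
  qed (simp add: mult_out)
qed

lemma tr_mult_comm: "tr X (mult X A B) = tr X (mult X B A)"
  unfolding tr_def mult_def by (simp add: mult.commute) (rule sum.swap)

lemma idop_row: "finite X \<Longrightarrow> f \<in> basis X \<Longrightarrow> (\<Sum>g\<in>basis X. idop X f g * v g) = v f"
proof -
  assume "finite X" "f \<in> basis X"
  have "(\<Sum>g\<in>basis X. idop X f g * v g) = (\<Sum>g\<in>basis X. if g = f then v f else 0)"
    by (intro sum.cong refl) (auto simp: idop_def)
  then show ?thesis using \<open>finite X\<close> \<open>f \<in> basis X\<close> by (simp add: finite_basis)
qed

lemma mult_idop_left: "finite X \<Longrightarrow> in_L X A \<Longrightarrow> mult X (idop X) A = A"
  by (intro ext) (auto simp: mult_def idop_row in_L_vanish_left in_L_vanish_right)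

lemma mult_idop_right: "finite X \<Longrightarrow> in_L X A \<Longrightarrow> mult X A (idop X) = A"
proof (intro ext)
  fix f g assume "finite X" and A: "in_L X A"
  show "mult X A (idop X) f g = A f g"
  proof (cases "f \<in> basis X \<and> g \<in> basis X")
    case True
    then have "mult X A (idop X) f g = (\<Sum>h\<in>basis X. if h = g then A f h else 0)"
      by (auto simp: mult_in idop_def intro!: sum.cong)
    then show ?thesis using True \<open>finite X\<close> by (simp add: finite_basis)
  qed (use A in \<open>auto simp: mult_out in_L_vanish_left in_L_vanish_right\<close>)
qed

lemma mult_add_left: "mult X (\<lambda>f g. A f g + B f g) C = (\<lambda>f g. mult X A C f g + mult X B C f g)"
  by (intro ext) (simp add: mult_def distrib_right sum.distrib)

lemma mult_diff_left: "mult X (\<lambda>f g. A f g - B f g) C = (\<lambda>f g. mult X A C f g - mult X B C f g)"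
  by (intro ext) (simp add: mult_def left_diff_distrib sum_subtractf)

lemma mult_diff_right: "mult X C (\<lambda>f g. A f g - B f g) = (\<lambda>f g. mult X C A f g - mult X C B f g)"
  by (intro ext) (simp add: mult_def right_diff_distrib sum_subtractf)

lemma mult_scale_right: "mult X C (\<lambda>f g. c * A f g) = (\<lambda>f g. c * mult X C A f g)"
  by (intro ext) (simp add: mult_def sum_distrib_left mult.left_commute)

lemma tr_add: "tr X (\<lambda>f g. A f g + B f g) = tr X A + tr X B"
  unfolding tr_def by (simp add: sum.distrib)

lemma tr_diff: "tr X (\<lambda>f g. A f g - B f g) = tr X A - tr X B"
  unfolding tr_def by (simp add: sum_subtractf)

lemma tr_scale: "tr X (\<lambda>f g. c * A f g) = c * tr X A"
  unfolding tr_def by (simp add: sum_distrib_left)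

lemma tr_outer: "tr X (outer X v v) = inprod X v v"
  unfolding tr_def outer_def inprod_def by (simp add: mult.commute)

lemma tr_mult_outer: "tr X (mult X A (outer X v v)) = qform X A v v"
  unfolding tr_def qform_def by (intro sum.cong refl) (simp add: mult_in outer_def sum_distrib_left mult_ac)

lemma adj_mult: "adj (mult X A B) = mult X (adj B) (adj A)"
  unfolding adj_def mult_def by (intro ext) (auto simp: mult.commute)

lemma apply_op_mult: "apply_op X (mult X A B) v = apply_op X A (apply_op X B v)"
proof (intro ext)
  fix f
  show "apply_op X (mult X A B) v f = apply_op X A (apply_op X B v) f"
  proof (cases "f \<in> basis X")
    case True
    have "apply_op X (mult X A B) v f = (\<Sum>g\<in>basis X. \<Sum>h\<in>basis X. A f h * B h g * v g)"
      using True by (simp add: apply_op_def mult_in sum_distrib_right)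
    also have "\<dots> = (\<Sum>h\<in>basis X. \<Sum>g\<in>basis X. A f h * B h g * v g)"
      by (rule sum.swap)
    also have "\<dots> = apply_op X A (apply_op X B v) f"
      using True by (simp add: apply_op_def sum_distrib_left mult.assoc)
    finally show ?thesis .
  qed (simp add: apply_op_def)
qed

lemma apply_op_lin:
  "apply_op X A (\<lambda>f. u f + c * w f) = (\<lambda>f. apply_op X A u f + c * apply_op X A w f)"
  unfolding apply_op_def
  by (intro ext) (auto simp: distrib_left sum.distrib sum_distrib_left mult.left_commute)

lemma apply_op_zero: "apply_op X A (\<lambda>f. 0) = (\<lambda>f. 0)"
  unfolding apply_op_def by auto

lemma supp_apply_op: "supp_vec X (apply_op X A v)"
  unfolding supp_vec_def apply_op_def by auto

lemma apply_idop: "finite X \<Longrightarrow> supp_vec X v \<Longrightarrow> apply_op X (idop X) v = v"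
  by (rule ext) (auto simp: apply_op_def idop_row supp_vec_def)

lemma apply_id_minus:
  "finite X \<Longrightarrow> supp_vec X v \<Longrightarrow> apply_op X (id_minus X M) v = (\<lambda>f. v f - apply_op X M v f)"
  unfolding id_minus_def
  by (subst apply_idop[symmetric], assumption+)
    (intro ext, simp add: apply_op_def left_diff_distrib sum_subtractf)

lemma qform_eq_inprod: "qform X C u w = inprod X u (apply_op X C w)"
  unfolding qform_def inprod_def apply_op_def
  by (auto simp: sum_distrib_left mult.assoc intro!: sum.cong)

lemma inprod_apply_adj: "inprod X u (apply_op X A w) = inprod X (apply_op X (adj A) u) w"
proof -
  have "inprod X u (apply_op X A w) = (\<Sum>f\<in>basis X. \<Sum>g\<in>basis X. cnj (u f) * (A f g * w g))"
    unfolding inprod_def apply_op_def by (auto simp: sum_distrib_left intro!: sum.cong)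
  also have "\<dots> = (\<Sum>g\<in>basis X. \<Sum>f\<in>basis X. cnj (u f) * (A f g * w g))"
    by (rule sum.swap)
  also have "\<dots> = inprod X (apply_op X (adj A) u) w"
    unfolding inprod_def apply_op_def adj_def
    by (auto simp: sum_distrib_right sum_distrib_left mult_ac intro!: sum.cong)
  finally show ?thesis .
qed

lemma qform_sandwich:
  "qform X (mult X (mult X B A) (adj B)) w w = qform X A (apply_op X (adj B) w) (apply_op X (adj B) w)"
  by (simp add: qform_eq_inprod apply_op_mult inprod_apply_adj)

lemma qform_scale: "qform X (\<lambda>f g. c * A f g) u w = c * qform X A u w"
  unfolding qform_def by (simp add: sum_distrib_left mult_ac)

lemma qform_diff: "qform X (\<lambda>f g. A f g - B f g) u w = qform X A u w - qform X B u w"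
  unfolding qform_def by (simp add: algebra_simps sum_subtractf)

lemma qform_idop: "finite X \<Longrightarrow> qform X (idop X) v v = inprod X v v"
  unfolding qform_eq_inprod inprod_def apply_op_def by (simp add: idop_row)

lemma qform_id_minus: "finite X \<Longrightarrow> qform X (id_minus X M) v v = inprod X v v - qform X M v v"
  unfolding id_minus_def by (simp add: qform_diff qform_idop)

lemma qform_expand:
  "qform X C (\<lambda>x. u x + t * w x) (\<lambda>x. u x + t * w x)
     = qform X C u u + t * qform X C u w + cnj t * qform X C w u + cnj t * t * qform X C w w"
  unfolding qform_def
  by (simp add: algebra_simps sum.distrib sum_distrib_left)

lemma qform_ket_left:
  "finite X \<Longrightarrow> f \<in> basis X \<Longrightarrow> qform X C (ket f) v = (\<Sum>b\<in>basis X. C f b * v b)"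
proof -
  assume "finite X" "f \<in> basis X"
  have "qform X C (ket f) v = (\<Sum>a\<in>basis X. if a = f then (\<Sum>b\<in>basis X. C f b * v b) else 0)"
    unfolding qform_def ket_def by (intro sum.cong refl) auto
  then show ?thesis using \<open>finite X\<close> \<open>f \<in> basis X\<close> by (simp add: finite_basis)
qed

lemma qform_ket_right:
  "finite X \<Longrightarrow> g \<in> basis X \<Longrightarrow> qform X C v (ket g) = (\<Sum>a\<in>basis X. cnj (v a) * C a g)"
proof -
  assume "finite X" "g \<in> basis X"
  have "qform X C v (ket g) = (\<Sum>a\<in>basis X. \<Sum>b\<in>basis X. if b = g then cnj (v a) * C a g else 0)"
    unfolding qform_def ket_def by (intro sum.cong refl) auto
  then show ?thesis using \<open>finite X\<close> \<open>g \<in> basis X\<close> by (simp add: finite_basis)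
qed

lemma qform_ket_ket:
  "finite X \<Longrightarrow> f \<in> basis X \<Longrightarrow> g \<in> basis X \<Longrightarrow> qform X C (ket f) (ket g) = C f g"
proof -
  assume "finite X" "f \<in> basis X" "g \<in> basis X"
  then have "qform X C (ket f) (ket g) = (\<Sum>b\<in>basis X. if b = g then C f g else 0)"
    by (simp add: qform_ket_left) (intro sum.cong refl, auto simp: ket_def)
  then show ?thesis using \<open>finite X\<close> \<open>g \<in> basis X\<close> by (simp add: finite_basis)
qed

lemma apply_op_ket: "finite X \<Longrightarrow> f \<in> basis X \<Longrightarrow> apply_op X C (ket f) g = (if g \<in> basis X then C g f else 0)"
  by (auto simp: apply_op_def qform_ket_left[symmetric] qform_ket_ket)


section \<open>Positive operators and projectors\<close>

lemma complex_nonneg_iff: "0 \<le> (z::complex) \<longleftrightarrow> Im z = 0 \<and> 0 \<le> Re z"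
  by (auto simp: less_eq_complex_def)

lemma psd_iff: "psd X C \<longleftrightarrow> in_L X C \<and> (\<forall>v. 0 \<le> qform X C v v)"
  unfolding psd_def qform_def complex_nonneg_iff by auto

lemma proj_in_L: "is_proj X P \<Longrightarrow> in_L X P"
  unfolding is_proj_def by blast

lemma proj_idem: "is_proj X P \<Longrightarrow> mult X P P = P"
  unfolding is_proj_def by blast

lemma proj_entry_cnj: "is_proj X P \<Longrightarrow> P f g = cnj (P g f)"
  unfolding is_proj_def by blast

lemma adj_proj: "is_proj X P \<Longrightarrow> adj P = P"
  unfolding adj_def by (intro ext) (simp add: proj_entry_cnj[symmetric])

lemma idop_proj: "finite X \<Longrightarrow> is_proj X (idop X)"
  unfolding is_proj_def by (simp add: mult_idop_left) (simp add: idop_def)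

lemma id_minus_proj:
  assumes F: "finite X" and P: "is_proj X P"
  shows "is_proj X (id_minus X P)"
  unfolding is_proj_def
proof (intro conjI allI)
  have L: "in_L X P" by (rule proj_in_L[OF P])
  show "in_L X (id_minus X P)" by (rule id_minus_in_L[OF L])
  show "mult X (id_minus X P) (id_minus X P) = id_minus X P"
    unfolding id_minus_def
    by (simp add: mult_diff_left mult_diff_right mult_idop_left mult_idop_right F L proj_idem[OF P])
  fix f g
  show "id_minus X P f g = cnj (id_minus X P g f)"
    unfolding id_minus_def idop_def by (subst proj_entry_cnj[OF P, of f g]) auto
qed

lemma psd_hermitian:
  assumes F: "finite X" and P: "psd X C"
  shows "C f g = cnj (C g f)"
proof (cases "f \<in> basis X \<and> g \<in> basis X")
  case True
  have real: "\<And>v. Im (qform X C v v) = 0" using P by (auto simp: psd_iff complex_nonneg_iff)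
  have ff: "Im (C f f) = 0" and gg: "Im (C g g) = 0"
    using real[of "ket f"] real[of "ket g"] True F by (simp_all add: qform_ket_ket)
  have e: "\<And>t. qform X C (\<lambda>x. ket f x + t * ket g x) (\<lambda>x. ket f x + t * ket g x)
      = C f f + t * C f g + cnj t * C g f + cnj t * t * C g g"
    using True F by (simp add: qform_expand qform_ket_ket)
  have "Im (C f g + C g f) = 0" using real[of "\<lambda>x. ket f x + 1 * ket g x"] e[of 1] ff gg by simp
  moreover have "Re (C f g) - Re (C g f) = 0"
    using real[of "\<lambda>x. ket f x + \<i> * ket g x"] e[of "\<i>"] ff gg by simp
  ultimately show ?thesis by (simp add: complex_eq_iff)
next
  case False
  then show ?thesis using P by (auto simp: psd_iff in_L_vanish_left in_L_vanish_right)
qed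

lemma quadratic_nonneg_imp_zero:
  fixes x c :: complex
  assumes c: "0 \<le> c" and H: "\<And>t. 0 \<le> Re (t * cnj x + cnj t * x + cnj t * t * c)"
  shows "x = 0"
proof -
  define r where "r = 1 / (Re c + 1)"
  have cr: "Im c = 0" "Re c \<ge> 0" using c by (auto simp: complex_nonneg_iff)
  have r: "r > 0" "r * Re c < 1" using cr by (auto simp: r_def field_simps)
  have "0 \<le> Re ((- of_real r * x) * cnj x + cnj (- of_real r * x) * x
                 + cnj (- of_real r * x) * (- of_real r * x) * c)"
    by (rule H)
  also have "\<dots> = ((Re x)\<^sup>2 + (Im x)\<^sup>2) * (r * (r * Re c - 2))"
    using cr by (simp add: algebra_simps power2_eq_square)
  finally have "0 \<le> ((Re x)\<^sup>2 + (Im x)\<^sup>2) * (r * (r * Re c - 2))" .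
  moreover have "r * (r * Re c - 2) < 0" using r by (simp add: mult_pos_neg)
  ultimately have "(Re x)\<^sup>2 + (Im x)\<^sup>2 \<le> 0" by (meson mult_less_0_iff not_le order_le_less)
  then show ?thesis by (simp add: complex_eq_iff sum_power2_le_zero_iff)
qed

text \<open>For \<open>C \<ge> 0\<close>, \<open>\<langle>v|C|v\<rangle> = 0\<close> forces \<open>C v = 0\<close>: otherwise
  \<open>\<langle>v + t f|C|v + t f\<rangle>\<close> would be negative for a small multiple \<open>t\<close> of \<open>\<langle>f|C|v\<rangle>\<close>.\<close>

lemma psd_kernel:
  assumes F: "finite X" and P: "psd X C" and Z: "qform X C v v = 0"
  shows "apply_op X C v = (\<lambda>f. 0)"
proof (intro ext)
  fix f0
  show "apply_op X C v f0 = 0"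
  proof (cases "f0 \<in> basis X")
    case True
    define x where "x = qform X C (ket f0) v"
    have xa: "apply_op X C v f0 = x" using True F by (simp add: x_def qform_ket_left apply_op_def)
    have y: "qform X C v (ket f0) = cnj x"
    proof -
      have "qform X C v (ket f0) = (\<Sum>a\<in>basis X. cnj (C f0 a * v a))"
        using True F by (simp add: qform_ket_right)
          (intro sum.cong refl, subst psd_hermitian[OF F P, of _ f0], simp add: mult.commute)
      also have "\<dots> = cnj x" using True F by (simp add: x_def qform_ket_left)
      finally show ?thesis .
    qed
    have c: "0 \<le> C f0 f0" using P True F qform_ket_ket[OF F True True, of C] by (metis psd_iff)
    have "x = 0"
    proof (rule quadratic_nonneg_imp_zero[OF c])
      fix t
      have "0 \<le> qform X C (\<lambda>x. v x + t * ket f0 x) (\<lambda>x. v x + t * ket f0 x)"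
        using P by (simp add: psd_iff)
      also have "qform X C (\<lambda>x. v x + t * ket f0 x) (\<lambda>x. v x + t * ket f0 x)
          = t * cnj x + cnj t * x + cnj t * t * C f0 f0"
        by (simp add: qform_expand Z y x_def[symmetric] qform_ket_ket[OF F True True])
      finally show "0 \<le> Re (t * cnj x + cnj t * x + cnj t * t * C f0 f0)"
        by (simp add: complex_nonneg_iff)
    qed
    then show ?thesis using xa by simp
  qed (simp add: apply_op_def)
qed

lemma tr_psd_nonneg: "finite X \<Longrightarrow> psd X C \<Longrightarrow> 0 \<le> tr X C"
  unfolding tr_def by (rule sum_nonneg) (metis psd_iff qform_ket_ket)

lemma psd_tr_zero:
  assumes F: "finite X" and P: "psd X C" and T: "tr X C = 0"
  shows "C = (\<lambda>f g. 0)"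
proof (intro ext)
  fix g f
  show "C g f = 0"
  proof (cases "f \<in> basis X \<and> g \<in> basis X")
    case True
    have "\<And>h. h \<in> basis X \<Longrightarrow> 0 \<le> C h h" using P qform_ket_ket[OF F] by (metis psd_iff)
    then have "C f f = 0"
      using T True sum_nonneg_eq_0_iff[of "basis X" "\<lambda>h. C h h"] finite_basis[OF F]
      unfolding tr_def by blast
    then have "apply_op X C (ket f) = (\<lambda>f. 0)"
      using True by (intro psd_kernel[OF F P]) (simp add: qform_ket_ket[OF F])
    then show ?thesis using True F by (metis apply_op_ket)
  next
    case False
    then show ?thesis using P by (auto simp: psd_iff in_L_vanish_left in_L_vanish_right)
  qed
qed

lemma outer_psd: "psd X (outer X v v)"
  unfolding psd_iff
proof (intro conjI allI)
  show "in_L X (outer X v v)" by (rule outer_in_L)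
  fix w
  define z where "z = (\<Sum>a\<in>basis X. cnj (w a) * v a)"
  have "qform X (outer X v v) w w = (\<Sum>a\<in>basis X. \<Sum>b\<in>basis X. (cnj (w a) * v a) * cnj (cnj (w b) * v b))"
    unfolding qform_def outer_def by (intro sum.cong refl) (simp add: mult_ac)
  also have "\<dots> = z * cnj z" unfolding z_def by (simp add: sum_product)
  finally show "0 \<le> qform X (outer X v v) w w"
    by (simp add: complex_nonneg_iff complex_mult_cnj)
qed

lemma psd_sandwich: "psd X \<rho> \<Longrightarrow> psd X (mult X (mult X A \<rho>) (adj A))"
  by (simp add: psd_iff qform_sandwich)

lemma tr_proj_sandwich: "is_proj X P \<Longrightarrow> tr X (mult X (mult X P A) (adj P)) = tr X (mult X P A)"
  by (metis adj_proj mult_assoc proj_idem tr_mult_comm)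

lemma tr_proj_mult_nonneg: "finite X \<Longrightarrow> is_proj X P \<Longrightarrow> psd X A \<Longrightarrow> 0 \<le> tr X (mult X P A)"
  by (metis psd_sandwich tr_proj_sandwich tr_psd_nonneg)

lemma tr_proj_mult_le:
  assumes F: "finite X" and P: "is_proj X P" and A: "psd X A"
  shows "tr X (mult X P A) \<le> tr X A"
proof -
  have "0 \<le> tr X (mult X (id_minus X P) A)"
    by (rule tr_proj_mult_nonneg[OF F id_minus_proj[OF F P] A])
  also have "tr X (mult X (id_minus X P) A) = tr X A - tr X (mult X P A)"
    using A unfolding id_minus_def by (simp add: mult_diff_left tr_diff mult_idop_left F psd_iff)
  finally show ?thesis by simp
qed

lemma adj_eq_if_psd_id_minus:
  assumes "finite X" and "psd X (id_minus X M)"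
  shows "adj M = M"
proof (intro ext)
  fix f g
  have "idop X f g - M f g = cnj (idop X g f - M g f)"
    using psd_hermitian[OF assms, of f g] unfolding id_minus_def .
  moreover have "cnj (idop X g f) = idop X f g" unfolding idop_def by auto
  ultimately show "adj M f g = M f g" unfolding adj_def by simp
qed


section \<open>Subspaces as images of projectors\<close>

definition is_subspace :: "qvar set \<Rightarrow> vec set \<Rightarrow> bool" where
  "is_subspace X G \<longleftrightarrow> G \<subseteq> {v. supp_vec X v} \<and> (\<lambda>f. 0) \<in> G \<and>
     (\<forall>u\<in>G. \<forall>w\<in>G. \<forall>c. (\<lambda>f. u f + c * w f) \<in> G)"

lemma img_is_subspace: "is_subspace X (img X P)"
  unfolding is_subspace_def img_def by (auto simp: apply_op_lin apply_op_zero supp_vec_def)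

lemma apply_proj_in_img: "is_proj X P \<Longrightarrow> apply_op X P v \<in> img X P"
  unfolding img_def by (simp add: supp_apply_op apply_op_mult[symmetric] proj_idem)

lemma col_in_img: "is_proj X P \<Longrightarrow> col P g \<in> img X P"
proof -
  assume P: "is_proj X P"
  have "apply_op X P (col P g) = col P g"
  proof (intro ext)
    fix f
    show "apply_op X P (col P g) f = col P g f"
    proof (cases "f \<in> basis X \<and> g \<in> basis X")
      case True
      then have "apply_op X P (col P g) f = mult X P P f g" by (simp add: apply_op_def col_def mult_in)
      then show ?thesis by (simp add: proj_idem[OF P] col_def)
    qed (use proj_in_L[OF P] in \<open>auto simp: apply_op_def col_def in_L_vanish_left in_L_vanish_right\<close>)
  qed
  moreover have "supp_vec X (col P g)"
    using proj_in_L[OF P] unfolding supp_vec_def col_def by (simp add: in_L_vanish_left)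
  ultimately show ?thesis unfolding img_def by blast
qed

lemma tr_proj_mult_eq_0_iff:
  assumes F: "finite X" and T: "is_proj X T" and A: "psd X A"
  shows "tr X (mult X T A) = 0 \<longleftrightarrow> (\<forall>y\<in>img X T. apply_op X A y = (\<lambda>f. 0))"
proof
  assume "tr X (mult X T A) = 0"
  then have C: "mult X (mult X T A) (adj T) = (\<lambda>f g. 0)"
    using psd_tr_zero[OF F psd_sandwich[OF A]] tr_proj_sandwich[OF T] by simp
  show "\<forall>y\<in>img X T. apply_op X A y = (\<lambda>f. 0)"
  proof
    fix y assume "y \<in> img X T"
    then have "apply_op X T y = y" unfolding img_def by simp
    then have "qform X A y y = 0"
      using qform_sandwich[of X T A y] adj_proj[OF T] C by (simp add: qform_def)
    then show "apply_op X A y = (\<lambda>f. 0)" by (rule psd_kernel[OF F A])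
  qed
next
  assume kernel: "\<forall>y\<in>img X T. apply_op X A y = (\<lambda>f. 0)"
  have "mult X A T = (\<lambda>f g. 0)"
  proof (intro ext)
    fix f g
    have "apply_op X A (col T g) f = 0" using col_in_img[OF T] kernel by simp
    then show "mult X A T f g = 0"
      by (cases "f \<in> basis X \<and> g \<in> basis X") (simp_all add: apply_op_def col_def mult_in mult_out)
  qed
  then show "tr X (mult X T A) = 0" using tr_mult_comm[of X T A] by (simp add: tr_def)
qed

lemma img_subset_imp_mult_eq:
  assumes A: "is_proj X A" and sub: "img X A \<subseteq> img X B"
  shows "mult X B A = A"
proof (intro ext)
  fix f g
  show "mult X B A f g = A f g"
  proof (cases "f \<in> basis X \<and> g \<in> basis X")
    case True
    have "col A g \<in> img X B" using col_in_img[OF A] sub by blast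
    then have "apply_op X B (col A g) f = col A g f" unfolding img_def by simp
    then show ?thesis using True by (simp add: apply_op_def col_def mult_in)
  qed (use proj_in_L[OF A] in \<open>auto simp: mult_out in_L_vanish_left in_L_vanish_right\<close>)
qed

lemma img_subset_if_mult_eq: "mult X B A = A \<Longrightarrow> img X A \<subseteq> img X B"
  unfolding img_def by (auto, metis apply_op_mult)

lemma proj_eq_if_img_eq:
  assumes A: "is_proj X A" and B: "is_proj X B" and eq: "img X A = img X B"
  shows "A = B"
proof -
  have "A = adj (mult X B A)" using img_subset_imp_mult_eq[OF A] eq adj_proj[OF A] by simp
  also have "\<dots> = mult X A B" by (simp add: adj_mult adj_proj[OF A] adj_proj[OF B])
  also have "\<dots> = B" using img_subset_imp_mult_eq[OF B] eq by simp
  finally show ?thesis .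
qed

lemma img_subset_if_img_id_minus_subset:
  assumes F: "finite X" and A: "is_proj X A" and B: "is_proj X B"
    and sub: "img X (id_minus X B) \<subseteq> img X (id_minus X A)"
  shows "img X A \<subseteq> img X B"
proof -
  have LA: "in_L X A" and LB: "in_L X B" using A B by (simp_all add: proj_in_L)
  have "mult X (id_minus X A) (id_minus X B) = id_minus X B"
    by (rule img_subset_imp_mult_eq[OF id_minus_proj[OF F B] sub])
  then have "mult X A B = A"
    unfolding id_minus_def
    by (simp add: mult_diff_left mult_diff_right mult_idop_left mult_idop_right F LA LB fun_eq_iff)
  then have "mult X B A = A" using arg_cong[of _ _ adj] by (metis adj_mult adj_proj A B)
  then show ?thesis by (rule img_subset_if_mult_eq)
qed

lemma pleq_iff_img_id_minus:
  assumes F: "finite X" and A: "is_proj X A" and B: "is_proj X B"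
  shows "pleq X A B \<longleftrightarrow> img X (id_minus X B) \<subseteq> img X (id_minus X A)"
  using img_subset_if_img_id_minus_subset[OF F id_minus_proj[OF F B] id_minus_proj[OF F A]]
    img_subset_if_img_id_minus_subset[OF F A B]
  unfolding pleq_def by (auto simp: id_minus_id_minus proj_in_L A B)

lemma inprod_real: "Im (inprod X u u) = 0"
  unfolding inprod_def by simp

lemma inprod_pos: "finite X \<Longrightarrow> supp_vec X u \<Longrightarrow> u \<noteq> (\<lambda>f. 0) \<Longrightarrow> 0 < Re (inprod X u u)"
proof -
  assume F: "finite X" "supp_vec X u" "u \<noteq> (\<lambda>f. 0)"
  then obtain f where f: "u f \<noteq> 0" by auto
  then have fb: "f \<in> basis X" using F(2) unfolding supp_vec_def by auto
  have "Re (inprod X u u) = (\<Sum>g\<in>basis X. (Re (u g))\<^sup>2 + (Im (u g))\<^sup>2)"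
    unfolding inprod_def by (simp add: power2_eq_square)
  also have "\<dots> \<ge> (Re (u f))\<^sup>2 + (Im (u f))\<^sup>2"
    by (rule member_le_sum) (use fb F finite_basis in auto)
  moreover have "(Re (u f))\<^sup>2 + (Im (u f))\<^sup>2 > 0"
    using f by (simp add: complex_eq_iff sum_power2_gt_zero_iff)
  ultimately show ?thesis by linarith
qed

lemma dens_normalized_outer:
  assumes F: "finite X" and v: "supp_vec X v" "v \<noteq> (\<lambda>f. 0)"
  shows "dens X (\<lambda>f g. (1 / inprod X v v) * outer X v v f g)"
  unfolding dens_def psd_iff
proof (intro conjI allI)
  have pos: "0 < Re (inprod X v v)" and real: "Im (inprod X v v) = 0"
    using inprod_pos[OF F v] inprod_real by auto
  show "Re (tr X (\<lambda>f g. (1 / inprod X v v) * outer X v v f g)) \<le> 1"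
    using pos unfolding tr_scale tr_outer by (auto simp: complex_eq_iff)
  fix w
  have "0 \<le> 1 / inprod X v v" using pos real by (simp add: complex_nonneg_iff Re_divide Im_divide)
  moreover have "0 \<le> qform X (outer X v v) w w" using outer_psd by (simp add: psd_iff)
  ultimately show "0 \<le> qform X (\<lambda>f g. (1 / inprod X v v) * outer X v v f g) w w"
    unfolding qform_scale by (rule mult_nonneg_nonneg)
qed (simp add: in_L_def outer_def)

lemma proj_diag_le_1:
  assumes F: "finite X" and P: "is_proj X P"
  shows "Re (P f f) \<le> 1"
proof (cases "f \<in> basis X")
  case True
  have "P f f = (\<Sum>h\<in>basis X. P f h * P h f)"
    using fun_cong[OF fun_cong[OF proj_idem[OF P], of f], of f] True by (simp add: mult_in)
  also have "\<dots> = (\<Sum>h\<in>basis X. P f h * cnj (P f h))"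
    by (intro sum.cong refl) (subst proj_entry_cnj[OF P, of _ f], simp)
  finally have e: "Re (P f f) = (\<Sum>h\<in>basis X. Re (P f h * cnj (P f h)))" by simp
  have im: "Im (P f f) = 0" using proj_entry_cnj[OF P, of f f] by (metis cnj.simps(2) neg_equal_zero)
  have "Re (P f f * cnj (P f f)) \<le> Re (P f f)"
    unfolding e by (rule member_le_sum) (use True F finite_basis in auto)
  then have "Re (P f f) * Re (P f f) \<le> Re (P f f)" using im by simp
  then show ?thesis using mult_le_cancel_left2[of "Re (P f f)" "Re (P f f)"] by linarith
qed (use proj_in_L[OF P] in \<open>simp add: in_L_vanish_left\<close>)

lemma tr_proj_le_card: "finite X \<Longrightarrow> is_proj X P \<Longrightarrow> Re (tr X P) \<le> real (card (basis X))"
  unfolding tr_def Re_sum using sum_mono[of "basis X" "\<lambda>f. Re (P f f)" "\<lambda>_. 1"]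
  by (simp add: proj_diag_le_1)

lemma is_proj_zero: "is_proj X (\<lambda>f g. 0)"
  unfolding is_proj_def in_L_def mult_def by (auto simp: fun_eq_iff)

lemma img_zero: "img X (\<lambda>f g. 0) = {\<lambda>f. 0}"
  unfolding img_def apply_op_def supp_vec_def by (auto simp: fun_eq_iff)

lemma is_proj_add_outer:
  assumes F: "finite X" and P: "is_proj X P" and u: "supp_vec X u" "u \<noteq> (\<lambda>f. 0)"
    and Pu: "apply_op X P u = (\<lambda>f. 0)"
  shows "is_proj X (\<lambda>f g. P f g + outer X u u f g / inprod X u u)"
  unfolding is_proj_def
proof (intro conjI allI)
  define c where "c = inprod X u u"
  have L: "in_L X P" by (rule proj_in_L[OF P])
  have c0: "c \<noteq> 0" using inprod_pos[OF F u] by (auto simp: c_def)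
  have Pu': "(\<Sum>h\<in>basis X. P f h * u h) = 0" if "f \<in> basis X" for f
    using fun_cong[OF Pu, of f] that unfolding apply_op_def by simp
  have uP: "(\<Sum>h\<in>basis X. cnj (u h) * P h g) = 0" if "g \<in> basis X" for g
  proof -
    have "(\<Sum>h\<in>basis X. cnj (u h) * P h g) = cnj (\<Sum>h\<in>basis X. P g h * u h)"
      by (simp add: mult.commute) (intro sum.cong refl, subst proj_entry_cnj[OF P, of _ g], simp)
    then show ?thesis using Pu'[OF that] by simp
  qed
  have cc: "(\<Sum>h\<in>basis X. cnj (u h) * u h) = c" unfolding c_def inprod_def by simp
  show "in_L X (\<lambda>f g. P f g + outer X u u f g / c)" using L unfolding in_L_def outer_def by auto
  fix f g
  show "mult X (\<lambda>f g. P f g + outer X u u f g / c) (\<lambda>f g. P f g + outer X u u f g / c)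
      = (\<lambda>f g. P f g + outer X u u f g / c)"
  proof (intro ext)
    fix f g
    show "mult X (\<lambda>f g. P f g + outer X u u f g / c) (\<lambda>f g. P f g + outer X u u f g / c) f g
        = P f g + outer X u u f g / c"
    proof (cases "f \<in> basis X \<and> g \<in> basis X")
      case True
      have "mult X (\<lambda>f g. P f g + outer X u u f g / c) (\<lambda>f g. P f g + outer X u u f g / c) f g
          = (\<Sum>h\<in>basis X. P f h * P h g + (P f h * u h) * (cnj (u g) / c)
              + (u f / c) * (cnj (u h) * P h g) + (u f * cnj (u g) / (c * c)) * (cnj (u h) * u h))"
        using True c0 by (simp add: mult_in outer_def) (intro sum.cong refl, auto simp: field_simps)
      also have "\<dots> = mult X P P f g + (\<Sum>h\<in>basis X. P f h * u h) * (cnj (u g) / c)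
            + (u f / c) * (\<Sum>h\<in>basis X. cnj (u h) * P h g)
            + (u f * cnj (u g) / (c * c)) * (\<Sum>h\<in>basis X. cnj (u h) * u h)"
        using True by (simp add: sum.distrib sum_distrib_left sum_distrib_right mult_in sum_divide_distrib)
      also have "\<dots> = P f g + outer X u u f g / c"
        using True c0 by (simp add: proj_idem[OF P] Pu' uP cc outer_def)
      finally show ?thesis .
    qed (use L in \<open>auto simp: mult_out outer_def in_L_vanish_left in_L_vanish_right\<close>)
  qed
  have "cnj c = c" using inprod_real[of X u] by (simp add: c_def complex_eq_iff)
  then show "P f g + outer X u u f g / c = cnj (P g f + outer X u u g f / c)"
    unfolding outer_def by (subst proj_entry_cnj[OF P, of f g]) auto
qed

lemma tr_add_outer:
  "finite X \<Longrightarrow> supp_vec X u \<Longrightarrow> u \<noteq> (\<lambda>f. 0) \<Longrightarrow>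
    tr X (\<lambda>f g. P f g + outer X u u f g / inprod X u u) = tr X P + 1"
  using tr_outer[of X u] inprod_pos[of X u] unfolding tr_def
  by (auto simp: sum.distrib sum_divide_distrib[symmetric])

lemma img_add_outer:
  assumes u: "supp_vec X u" and "v \<in> img X (\<lambda>f g. P f g + outer X u u f g / inprod X u u)"
  shows "v = (\<lambda>f. apply_op X P v f + (inprod X u v / inprod X u u) * u f)"
proof (intro ext)
  fix f
  have v: "apply_op X (\<lambda>f g. P f g + outer X u u f g / inprod X u u) v = v" "supp_vec X v"
    using assms unfolding img_def by auto
  show "v f = apply_op X P v f + (inprod X u v / inprod X u u) * u f"
  proof (cases "f \<in> basis X")
    case True
    have "v f = (\<Sum>g\<in>basis X. (P f g + u f * cnj (u g) / inprod X u u) * v g)"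
      using True fun_cong[OF v(1), of f] by (simp add: apply_op_def outer_def cong: sum.cong)
    also have "\<dots> = (\<Sum>g\<in>basis X. P f g * v g + u f * (cnj (u g) * v g) / inprod X u u)"
      by (intro sum.cong refl) (simp add: divide_inverse algebra_simps)
    finally have "v f = \<dots>" .
    then show ?thesis
      using True unfolding inprod_def
      by (simp add: sum.distrib apply_op_def sum_divide_distrib sum_distrib_left sum_distrib_right mult_ac)
  qed (use u v in \<open>simp add: supp_vec_def apply_op_def\<close>)
qed

text \<open>A projector inside \<open>G\<close> but not onto \<open>G\<close> grows by the projector onto the component
  \<open>w - P w\<close> of a vector \<open>w \<in> G - P\<close> orthogonal to \<open>P\<close>.\<close>

lemma proj_extend_within_subspace:
  assumes F: "finite X" and G: "is_subspace X G" and P: "is_proj X P"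
    and sub: "img X P \<subseteq> G" and ne: "img X P \<noteq> G"
  shows "\<exists>P'. is_proj X P' \<and> img X P' \<subseteq> G \<and> Re (tr X P') = Re (tr X P) + 1"
proof -
  have supp: "\<And>v. v \<in> G \<Longrightarrow> supp_vec X v"
    and closed: "\<And>u w c. u \<in> G \<Longrightarrow> w \<in> G \<Longrightarrow> (\<lambda>f. u f + c * w f) \<in> G"
    using G unfolding is_subspace_def by auto
  obtain w where w: "w \<in> G" "w \<notin> img X P" using sub ne by blast
  have PG: "apply_op X P v \<in> G" for v using apply_proj_in_img[OF P] sub by blast
  define u where "u = (\<lambda>f. w f + (-1) * apply_op X P w f)"
  have uG: "u \<in> G" unfolding u_def by (rule closed[OF w(1) PG])
  have Pu: "apply_op X P u = (\<lambda>f. 0)"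
    unfolding u_def apply_op_lin apply_op_mult[symmetric] proj_idem[OF P] by simp
  have u0: "u \<noteq> (\<lambda>f. 0)"
  proof
    assume "u = (\<lambda>f. 0)"
    then have "apply_op X P w = w" unfolding u_def by (simp add: fun_eq_iff)
    then show False using w supp[OF w(1)] unfolding img_def by simp
  qed
  define P' where "P' = (\<lambda>f g. P f g + outer X u u f g / inprod X u u)"
  have "img X P' \<subseteq> G"
  proof
    fix v assume "v \<in> img X P'"
    then have v: "v = (\<lambda>f. apply_op X P v f + (inprod X u v / inprod X u u) * u f)"
      unfolding P'_def by (rule img_add_outer[OF supp[OF uG]])
    show "v \<in> G" by (subst v) (rule closed[OF PG uG])
  qed
  moreover have "Re (tr X P') = Re (tr X P) + 1"
    unfolding P'_def by (simp add: tr_add_outer[OF F supp[OF uG] u0])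
  ultimately show ?thesis using is_proj_add_outer[OF F P supp[OF uG] u0 Pu] unfolding P'_def by blast
qed

text \<open>Gram--Schmidt in disguise: the trace of a projector, its rank, is bounded by \<open>dim H\<^sub>X\<close>.\<close>

lemma subspace_is_img_proj:
  assumes F: "finite X" and G: "is_subspace X G"
  shows "\<exists>P. is_proj X P \<and> img X P = G"
proof -
  have "\<exists>P. is_proj X P \<and> img X P \<subseteq> G \<and> (img X P = G \<or> real n \<le> Re (tr X P))" for n
  proof (induction n)
    case 0
    have "(\<lambda>f. 0) \<in> G" using G unfolding is_subspace_def by simp
    then show ?case by (intro exI[of _ "\<lambda>f g. 0"]) (simp add: is_proj_zero img_zero tr_def)
  next
    case (Suc n)
    then obtain P where P: "is_proj X P" "img X P \<subseteq> G" "img X P = G \<or> real n \<le> Re (tr X P)"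
      by blast
    show ?case
    proof (cases "img X P = G")
      case False
      then show ?thesis using proj_extend_within_subspace[OF F G P(1,2)] P(3) by fastforce
    qed (use P in blast)
  qed
  then obtain P where P: "is_proj X P" "img X P \<subseteq> G"
    "img X P = G \<or> real (Suc (card (basis X))) \<le> Re (tr X P)"
    by blast
  have "\<not> real (Suc (card (basis X))) \<le> Re (tr X P)" using tr_proj_le_card[OF F P(1)] by simp
  then show ?thesis using P by blast
qed

lemma the_proj_eqI:
  assumes "is_proj X P0" "\<Phi> P0" "\<And>P. is_proj X P \<Longrightarrow> \<Phi> P \<Longrightarrow> img X P = img X P0"
  shows "(THE P. is_proj X P \<and> \<Phi> P) = P0"
proof (rule the_equality)
  show "is_proj X P0 \<and> \<Phi> P0" using assms(1,2) ..
  fix P assume "is_proj X P \<and> \<Phi> P"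
  then show "P = P0" using assms(1,3) proj_eq_if_img_eq by blast
qed

lemma pmeet_eq:
  "is_proj X R \<Longrightarrow> img X R = img X A \<inter> img X B \<Longrightarrow> pmeet X A B = R"
  unfolding pmeet_def by (rule the_proj_eqI) auto


section \<open>Cylindrical extension and partial blocks\<close>

text \<open>\<open>block S B r r'\<close> is the \<open>(r, r')\<close> block of \<open>B\<close> in \<open>H\<^sub>X = H\<^sub>S \<otimes> H\<^bsub>X - S\<^esub>\<close>,
  i.e. \<open>(I \<otimes> \<langle>r|) B (I \<otimes> |r'\<rangle>)\<close>; the partial trace over \<open>X - S\<close> is the sum of the diagonal blocks.\<close>

definition block :: "qvar set \<Rightarrow> op \<Rightarrow> bstate \<Rightarrow> bstate \<Rightarrow> op" where
  "block S B r r' = (\<lambda>a b. if a \<in> basis S \<and> b \<in> basis S then B (join a r) (join b r') else 0)"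

lemma op_eq_on_joins:
  assumes "S \<subseteq> X" "in_L X A" "in_L X B"
    and "\<And>s t r r'. s \<in> basis S \<Longrightarrow> t \<in> basis S \<Longrightarrow> r \<in> basis (X - S) \<Longrightarrow> r' \<in> basis (X - S)
          \<Longrightarrow> A (join s r) (join t r') = B (join s r) (join t r')"
  shows "A = B"
proof (intro ext)
  fix f g
  show "A f g = B f g"
  proof (cases "f \<in> basis X \<and> g \<in> basis X")
    case True
    then show ?thesis
      using assms(4)[of "restr S f" "restr S g" "restr (X - S) f" "restr (X - S) g"]
      by (simp add: join_restr[OF assms(1)])
  qed (use assms(2,3) in \<open>auto simp: in_L_vanish_left in_L_vanish_right\<close>)
qed

lemma ext_in_L [simp]: "in_L X (ext S X A)"
  unfolding in_L_def ext_def by auto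

lemma ext_join:
  "S \<subseteq> X \<Longrightarrow> s \<in> basis S \<Longrightarrow> t \<in> basis S \<Longrightarrow> r \<in> basis (X - S) \<Longrightarrow> r' \<in> basis (X - S) \<Longrightarrow>
    ext S X A (join s r) (join t r') = (if r = r' then A s t else 0)"
  by (simp add: ext_def join_in_basis agree_join restr_join_left)

lemma ext_self: "in_L S A \<Longrightarrow> ext S S A = A"
  unfolding ext_def by (intro ext) (auto simp: agree_def restr_id in_L_vanish_left in_L_vanish_right)

lemma ext_add: "ext S X (\<lambda>f g. A f g + B f g) = (\<lambda>f g. ext S X A f g + ext S X B f g)"
  unfolding ext_def by (intro ext) auto

lemma ext_diff: "ext S X (\<lambda>f g. A f g - B f g) = (\<lambda>f g. ext S X A f g - ext S X B f g)"
  unfolding ext_def by (intro ext) auto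

lemma mult_ext:
  assumes F: "finite X" and SX: "S \<subseteq> X"
  shows "mult X (ext S X A) (ext S X B) = ext S X (mult S A B)"
proof (rule op_eq_on_joins[OF SX])
  fix s t r r' assume st: "s \<in> basis S" "t \<in> basis S" "r \<in> basis (X - S)" "r' \<in> basis (X - S)"
  have "mult X (ext S X A) (ext S X B) (join s r) (join t r')
      = (\<Sum>u\<in>basis S. \<Sum>r''\<in>basis (X - S). ext S X A (join s r) (join u r'') * ext S X B (join u r'') (join t r'))"
    using st SX by (simp add: mult_in join_in_basis sum_basis_split[OF SX])
  also have "\<dots> = (\<Sum>u\<in>basis S. \<Sum>r''\<in>basis (X - S). if r'' = r then (if r = r' then A s u * B u t else 0) else 0)"
    using st SX by (intro sum.cong refl) (auto simp: ext_join)
  also have "\<dots> = ext S X (mult S A B) (join s r) (join t r')"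
    using st SX F by (simp add: ext_join mult_in finite_basis)
  finally show "mult X (ext S X A) (ext S X B) (join s r) (join t r') = ext S X (mult S A B) (join s r) (join t r')" .
qed simp_all

lemma ext_idop: "S \<subseteq> X \<Longrightarrow> ext S X (idop S) = idop X"
  by (rule op_eq_on_joins[OF _ ext_in_L idop_in_L]) (auto simp: ext_join idop_def join_in_basis join_eq_iff)

lemma ext_proj:
  assumes F: "finite X" and SX: "S \<subseteq> X" and P: "is_proj S P"
  shows "is_proj X (ext S X P)"
  unfolding is_proj_def
proof (intro conjI allI)
  show "mult X (ext S X P) (ext S X P) = ext S X P" by (simp add: mult_ext[OF F SX] proj_idem[OF P])
  fix f g
  have "agree (X - S) f g = agree (X - S) g f" unfolding agree_def by auto
  then show "ext S X P f g = cnj (ext S X P g f)"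
    unfolding ext_def by (auto simp: proj_entry_cnj[OF P, of "restr S f"])
qed simp

lemma tr_mult_ext:
  assumes F: "finite X" and SX: "S \<subseteq> X"
  shows "tr X (mult X (ext S X A) B) = (\<Sum>r\<in>basis (X - S). tr S (mult S A (block S B r r)))"
proof -
  have "tr X (mult X (ext S X A) B)
      = (\<Sum>s\<in>basis S. \<Sum>r\<in>basis (X - S). \<Sum>t\<in>basis S. \<Sum>r'\<in>basis (X - S).
            if r' = r then A s t * B (join t r) (join s r) else 0)"
    unfolding tr_def using SX
    by (simp add: sum_basis_split[OF SX] mult_in join_in_basis)
      (intro sum.cong refl, auto simp: ext_join)
  also have "\<dots> = (\<Sum>r\<in>basis (X - S). \<Sum>s\<in>basis S. \<Sum>t\<in>basis S. A s t * B (join t r) (join s r))"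
    using F by (simp add: finite_basis) (rule sum.swap)
  also have "\<dots> = (\<Sum>r\<in>basis (X - S). tr S (mult S A (block S B r r)))"
    unfolding tr_def by (intro sum.cong refl) (simp add: mult_in block_def)
  finally show ?thesis .
qed

lemma tr_eq_sum_blocks:
  assumes F: "finite X" and SX: "S \<subseteq> X" and L: "in_L X B"
  shows "tr X B = (\<Sum>r\<in>basis (X - S). tr S (block S B r r))"
proof -
  have "tr X B = tr X (mult X (ext S X (idop S)) B)"
    using ext_idop[OF SX] mult_idop_left[OF F L] by simp
  also have "\<dots> = (\<Sum>r\<in>basis (X - S). tr S (block S B r r))"
    using finite_subset[OF SX F] by (simp add: tr_mult_ext[OF F SX] mult_idop_left block_def in_L_def)
  finally show ?thesis .
qed

lemma sum_delta_pair:
  assumes "finite B" "r \<in> B" "r' \<in> B"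
  shows "(\<Sum>a\<in>A. \<Sum>r1\<in>B. \<Sum>b\<in>C. \<Sum>r2\<in>B. if r1 = r \<and> r2 = r' then G a b else 0) = (\<Sum>a\<in>A. \<Sum>b\<in>C. G a b)"
proof (intro sum.cong refl)
  fix a
  have "(\<Sum>r2\<in>B. if r1 = r \<and> r2 = r' then G a b else 0) = (if r1 = r then G a b else 0)" for r1 b
    using assms by (cases "r1 = r") simp_all
  then have "(\<Sum>r1\<in>B. \<Sum>b\<in>C. \<Sum>r2\<in>B. if r1 = r \<and> r2 = r' then G a b else 0)
      = (\<Sum>r1\<in>B. if r1 = r then (\<Sum>b\<in>C. G a b) else 0)"
    by (intro sum.cong refl) simp
  also have "\<dots> = (\<Sum>b\<in>C. G a b)" using assms by simp
  finally show "(\<Sum>r1\<in>B. \<Sum>b\<in>C. \<Sum>r2\<in>B. if r1 = r \<and> r2 = r' then G a b else 0) = (\<Sum>b\<in>C. G a b)" .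
qed

lemma psd_block:
  assumes F: "finite X" and SX: "S \<subseteq> X" and P: "psd X \<rho>" and r: "r \<in> basis (X - S)"
  shows "psd S (block S \<rho> r r)"
  unfolding psd_iff
proof (intro conjI allI)
  fix v
  define w :: vec where "w = (\<lambda>f. if f \<in> basis X \<and> restr (X - S) f = r then v (restr S f) else 0)"
  have wj: "\<And>s r'. s \<in> basis S \<Longrightarrow> r' \<in> basis (X - S) \<Longrightarrow> w (join s r') = (if r' = r then v s else 0)"
    using SX by (auto simp: w_def join_in_basis restr_join_left restr_join_right)
  have "qform X \<rho> w w = (\<Sum>s\<in>basis S. \<Sum>r1\<in>basis (X - S). \<Sum>t\<in>basis S. \<Sum>r2\<in>basis (X - S).
           if r1 = r \<and> r2 = r then cnj (v s) * \<rho> (join s r) (join t r) * v t else 0)"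
    unfolding qform_def by (simp add: sum_basis_split[OF SX]) (intro sum.cong refl, auto simp: wj)
  also have "\<dots> = qform S (block S \<rho> r r) v v"
    unfolding qform_def block_def using F r by (simp add: sum_delta_pair finite_basis)
  finally show "0 \<le> qform S (block S \<rho> r r) v v" using P by (metis psd_iff)
qed (simp add: block_def in_L_def)


section \<open>Programs acting on larger registers\<close>

lemma DProg_in_L: "DProg V E \<Longrightarrow> in_L V A \<Longrightarrow> in_L V (E A)"
  unfolding DProg_def by (drule conjunct1) blast

lemma DProg_linear:
  "DProg V E \<Longrightarrow> in_L V A \<Longrightarrow> in_L V B \<Longrightarrow> E (\<lambda>f g. c * A f g + B f g) = (\<lambda>f g. c * E A f g + E B f g)"
  unfolding DProg_def by (drule conjunct2, drule conjunct1) blast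

lemma DProg_psd_ext_so: "DProg V E \<Longrightarrow> finite X \<Longrightarrow> V \<subseteq> X \<Longrightarrow> psd X \<rho> \<Longrightarrow> psd X (ext_so V X E \<rho>)"
  unfolding DProg_def by (drule conjunct2, drule conjunct2, drule conjunct1) blast

lemma DProg_tr_le: "DProg V E \<Longrightarrow> psd V \<rho> \<Longrightarrow> Re (tr V (E \<rho>)) \<le> Re (tr V \<rho>)"
  unfolding DProg_def by (drule conjunct2, drule conjunct2, drule conjunct2) blast

lemma DProg_sum:
  assumes D: "DProg V E" and T: "finite T" and U: "\<And>p. p \<in> T \<Longrightarrow> in_L V (U p)"
  shows "E (\<lambda>f g. \<Sum>p\<in>T. c p * U p f g) = (\<lambda>f g. \<Sum>p\<in>T. c p * E (U p) f g)"
  using T U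
proof (induction T rule: finite_induct)
  case empty
  have "in_L V (\<lambda>f g. 0)" unfolding in_L_def by simp
  from DProg_linear[OF D this this, of "-1"] show ?case by simp
next
  case (insert p T)
  have "in_L V (\<lambda>f g. \<Sum>q\<in>T. c q * U q f g)"
    using insert.prems unfolding in_L_def by auto
  then show ?case
    using insert DProg_linear[OF D, of "U p" "\<lambda>f g. \<Sum>q\<in>T. c q * U q f g" "c p"] by simp
qed

lemma ext_so_out: "\<not> (f \<in> basis X \<and> g \<in> basis X) \<Longrightarrow> ext_so V X E \<rho> f g = 0"
  unfolding ext_so_def by auto

lemma ext_so_in_L [simp]: "in_L X (ext_so V X E \<rho>)"
  unfolding in_L_def ext_so_def by auto

lemma unit_op_in_L: "a \<in> basis V \<Longrightarrow> b \<in> basis V \<Longrightarrow> in_L V (unit_op a b)"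
  unfolding in_L_def unit_op_def by auto

lemma op_eq_sum_unit_ops:
  assumes F: "finite V" and L: "in_L V \<sigma>"
  shows "\<sigma> = (\<lambda>f g. \<Sum>p\<in>basis V \<times> basis V. \<sigma> (fst p) (snd p) * unit_op (fst p) (snd p) f g)"
proof (intro ext)
  fix f g
  have "(\<Sum>p\<in>basis V \<times> basis V. \<sigma> (fst p) (snd p) * unit_op (fst p) (snd p) f g)
      = (\<Sum>p\<in>basis V \<times> basis V. if p = (f, g) then \<sigma> f g else 0)"
    by (intro sum.cong refl) (auto simp: unit_op_def)
  also have "\<dots> = (if (f, g) \<in> basis V \<times> basis V then \<sigma> f g else 0)"
    using F finite_basis by simp
  also have "\<dots> = \<sigma> f g"
    using L by (auto simp: in_L_vanish_left in_L_vanish_right)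
  finally show "\<sigma> f g = (\<Sum>p\<in>basis V \<times> basis V. \<sigma> (fst p) (snd p) * unit_op (fst p) (snd p) f g)"
    by simp
qed

lemma ext_so_self:
  assumes F: "finite V" and D: "DProg V E" and L: "in_L V \<sigma>"
  shows "ext_so V V E \<sigma> = E \<sigma>"
proof (intro ext)
  fix f g
  have Esum: "E \<sigma> = (\<lambda>f g. \<Sum>p\<in>basis V \<times> basis V. \<sigma> (fst p) (snd p) * E (unit_op (fst p) (snd p)) f g)"
    by (subst op_eq_sum_unit_ops[OF F L], rule DProg_sum[OF D])
      (use F finite_basis unit_op_in_L in auto)
  show "ext_so V V E \<sigma> f g = E \<sigma> f g"
  proof (cases "f \<in> basis V \<and> g \<in> basis V")
    case True
    have "ext_so V V E \<sigma> f g = (\<Sum>a\<in>basis V. \<Sum>b\<in>basis V. \<sigma> a b * E (unit_op a b) f g)"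
      unfolding ext_so_def using True by (simp add: agree_def restr_id cong: sum.cong)
    also have "\<dots> = E \<sigma> f g"
      by (subst Esum) (simp add: sum.cartesian_product split_def)
    finally show ?thesis .
  qed (use DProg_in_L[OF D L] in \<open>auto simp: ext_so_out in_L_vanish_left in_L_vanish_right\<close>)
qed

lemma ext_so_join:
  assumes F: "finite X" and VS: "V \<subseteq> S" and SX: "S \<subseteq> X"
    and st: "s \<in> basis S" "t \<in> basis S" "r \<in> basis (X - S)" "r' \<in> basis (X - S)"
  shows "ext_so V X E \<rho> (join s r) (join t r') = ext_so V S E (block S \<rho> r r') s t"
proof -
  define K where "K a b = E (unit_op (restr V a) (restr V b)) (restr V s) (restr V t)" for a b
  have "ext_so V X E \<rho> (join s r) (join t r')
     = (\<Sum>a\<in>basis S. \<Sum>r1\<in>basis (X - S). \<Sum>b\<in>basis S. \<Sum>r2\<in>basis (X - S).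
         if r1 = r \<and> r2 = r' then (if agree (S - V) s a \<and> agree (S - V) t b
           then \<rho> (join a r) (join b r') * K a b else 0) else 0)"
    unfolding ext_so_def using SX st
    by (simp add: join_in_basis sum_basis_split[OF SX])
      (intro sum.cong refl, auto simp: agree_join_subset[OF VS SX] restr_join_subset[OF VS] K_def)
  also have "\<dots> = ext_so V S E (block S \<rho> r r') s t"
    unfolding ext_so_def K_def using F st
    by (simp add: sum_delta_pair finite_basis) (auto simp: block_def intro!: sum.cong)
  finally show ?thesis .
qed

lemma block_ext_so:
  assumes "finite X" "V \<subseteq> S" "S \<subseteq> X" "r \<in> basis (X - S)" "r' \<in> basis (X - S)"
  shows "block S (ext_so V X E \<rho>) r r' = ext_so V S E (block S \<rho> r r')"
  using ext_so_join[OF assms(1-3) _ _ assms(4,5)] by (intro ext) (auto simp: block_def ext_so_out)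

lemma tr_ext_so_le:
  assumes F: "finite X" and D: "DProg V E" and VX: "V \<subseteq> X" and P: "psd X \<rho>"
  shows "tr X (ext_so V X E \<rho>) \<le> tr X \<rho>"
proof -
  have FV: "finite V" using finite_subset[OF VX F] .
  have blk: "block V (ext_so V X E \<rho>) r r = E (block V \<rho> r r)" if "r \<in> basis (X - V)" for r
    using block_ext_so[OF F order_refl VX that that] ext_so_self[OF FV D] by (simp add: block_def in_L_def)
  have "tr X (ext_so V X E \<rho>) = (\<Sum>r\<in>basis (X - V). tr V (E (block V \<rho> r r)))"
    by (simp add: tr_eq_sum_blocks[OF F VX] blk)
  also have "\<dots> \<le> (\<Sum>r\<in>basis (X - V). tr V (block V \<rho> r r))"
  proof (rule sum_mono)
    fix r assume r: "r \<in> basis (X - V)"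
    have pb: "psd V (block V \<rho> r r)" by (rule psd_block[OF F VX P r])
    have "psd V (E (block V \<rho> r r))"
      using DProg_psd_ext_so[OF D FV order_refl pb] ext_so_self[OF FV D] DProg_in_L[OF D] pb
      by (simp add: psd_iff)
    then show "tr V (E (block V \<rho> r r)) \<le> tr V (block V \<rho> r r)"
      using DProg_tr_le[OF D pb] tr_psd_nonneg[OF FV] pb by (auto simp: less_eq_complex_def complex_nonneg_iff)
  qed
  also have "\<dots> = tr X \<rho>" using P by (simp add: tr_eq_sum_blocks[OF F VX] psd_iff)
  finally show ?thesis .
qed


section \<open>The Heisenberg-picture dual of a program\<close>

text \<open>\<open>so_dual V S E Q\<close> is \<open>E\<^sup>\<dagger>(Q)\<close> on \<open>H\<^sub>S\<close>, the matrix with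
  \<open>\<langle>b|E\<^sup>\<dagger>(Q)|a\<rangle> = tr (Q E(|a\<rangle>\<langle>b|))\<close>, so that \<open>tr (Q E(\<sigma>)) = tr (E\<^sup>\<dagger>(Q) \<sigma>)\<close>.
  \<open>so_dual_lib\<close> adds the probability \<open>I - E\<^sup>\<dagger>(I)\<close> of nontermination, giving the observable
  of partial correctness.\<close>

definition so_dual :: "qvar set \<Rightarrow> qvar set \<Rightarrow> superop \<Rightarrow> op \<Rightarrow> op" where
  "so_dual V S E Q = (\<lambda>b a. if a \<in> basis S \<and> b \<in> basis S
      then tr S (mult S Q (ext_so V S E (unit_op a b))) else 0)"

definition so_dual_lib :: "qvar set \<Rightarrow> qvar set \<Rightarrow> superop \<Rightarrow> op \<Rightarrow> op" where
  "so_dual_lib V S E Q = (\<lambda>f g. so_dual V S E Q f g + idop S f g - so_dual V S E (idop S) f g)"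

lemma so_dual_in_L [simp]: "in_L S (so_dual V S E Q)"
  unfolding in_L_def so_dual_def by auto

lemma so_dual_lib_in_L [simp]: "in_L S (so_dual_lib V S E Q)"
  unfolding in_L_def so_dual_lib_def so_dual_def idop_def by auto

lemma ext_so_eq_sum_unit_ops:
  assumes F: "finite S"
  shows "ext_so V S E \<sigma> = (\<lambda>f g. \<Sum>a\<in>basis S. \<Sum>b\<in>basis S. \<sigma> a b * ext_so V S E (unit_op a b) f g)"
proof (intro ext)
  fix f g
  show "ext_so V S E \<sigma> f g = (\<Sum>a\<in>basis S. \<Sum>b\<in>basis S. \<sigma> a b * ext_so V S E (unit_op a b) f g)"
  proof (cases "f \<in> basis S \<and> g \<in> basis S")
    case True
    define K where "K a b = E (unit_op (restr V a) (restr V b)) (restr V f) (restr V g)" for a b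
    have unit: "ext_so V S E (unit_op a b) f g
       = (if agree (S - V) f a \<and> agree (S - V) g b then K a b else 0)"
      if ab: "a \<in> basis S" "b \<in> basis S" for a b
    proof -
      have "ext_so V S E (unit_op a b) f g = (\<Sum>f'\<in>basis S. \<Sum>g'\<in>basis S.
          if g' = b then (if f' = a then (if agree (S - V) f a \<and> agree (S - V) g b then K a b else 0) else 0) else 0)"
        unfolding ext_so_def K_def using True by (auto simp: unit_op_def intro!: sum.cong)
      then show ?thesis using F ab finite_basis by simp
    qed
    have "(\<Sum>a\<in>basis S. \<Sum>b\<in>basis S. \<sigma> a b * ext_so V S E (unit_op a b) f g)
        = (\<Sum>a\<in>basis S. \<Sum>b\<in>basis S. \<sigma> a b * (if agree (S - V) f a \<and> agree (S - V) g b then K a b else 0))"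
      by (intro sum.cong refl) (simp add: unit)
    also have "\<dots> = ext_so V S E \<sigma> f g"
      unfolding ext_so_def K_def using True by (auto intro!: sum.cong)
    finally show ?thesis by simp
  qed (simp add: ext_so_out)
qed

lemma sum_swap_nested:
  "(\<Sum>f\<in>A. \<Sum>h\<in>B. \<Sum>a\<in>C. \<Sum>b\<in>D. F f h a b) = (\<Sum>a\<in>C. \<Sum>b\<in>D. \<Sum>f\<in>A. \<Sum>h\<in>B. F f h a b)"
proof -
  have "(\<Sum>f\<in>A. \<Sum>h\<in>B. \<Sum>a\<in>C. \<Sum>b\<in>D. F f h a b) = (\<Sum>f\<in>A. \<Sum>a\<in>C. \<Sum>b\<in>D. \<Sum>h\<in>B. F f h a b)"
    by (intro sum.cong refl) (subst sum.swap, intro sum.cong refl, rule sum.swap)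
  also have "\<dots> = (\<Sum>a\<in>C. \<Sum>b\<in>D. \<Sum>f\<in>A. \<Sum>h\<in>B. F f h a b)"
    by (subst sum.swap, intro sum.cong refl, rule sum.swap)
  finally show ?thesis .
qed

lemma tr_mult_ext_so_self:
  assumes F: "finite S"
  shows "tr S (mult S Q (ext_so V S E \<sigma>)) = tr S (mult S (so_dual V S E Q) \<sigma>)"
proof -
  have "tr S (mult S Q (ext_so V S E \<sigma>))
      = (\<Sum>f\<in>basis S. \<Sum>h\<in>basis S. \<Sum>a\<in>basis S. \<Sum>b\<in>basis S. \<sigma> a b * (Q f h * ext_so V S E (unit_op a b) h f))"
    unfolding tr_def by (subst ext_so_eq_sum_unit_ops[OF F]) (simp add: mult_in sum_distrib_left mult_ac)
  also have "\<dots> = (\<Sum>a\<in>basis S. \<Sum>b\<in>basis S. \<sigma> a b * so_dual V S E Q b a)"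
    by (subst sum_swap_nested, intro sum.cong refl) (simp add: so_dual_def tr_def mult_in sum_distrib_left)
  also have "\<dots> = tr S (mult S (so_dual V S E Q) \<sigma>)"
    unfolding tr_def by (subst sum.swap) (simp add: mult_in mult.commute)
  finally show ?thesis .
qed

lemma tr_mult_ext_so:
  assumes F: "finite X" and VS: "V \<subseteq> S" and SX: "S \<subseteq> X"
  shows "tr X (mult X (ext S X Q) (ext_so V X E \<rho>)) = tr X (mult X (ext S X (so_dual V S E Q)) \<rho>)"
  using finite_subset[OF SX F]
  by (simp add: tr_mult_ext[OF F SX] block_ext_so[OF F VS SX] tr_mult_ext_so_self)

lemma tr_mult_ext_so_lib:
  assumes F: "finite X" and VS: "V \<subseteq> S" and SX: "S \<subseteq> X" and L: "in_L X \<rho>"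
  shows "tr X (mult X (ext S X Q) (ext_so V X E \<rho>)) + tr X \<rho> - tr X (ext_so V X E \<rho>)
       = tr X (mult X (ext S X (so_dual_lib V S E Q)) \<rho>)"
proof -
  have "tr X \<rho> = tr X (mult X (ext S X (idop S)) \<rho>)"
    by (simp add: ext_idop[OF SX] mult_idop_left[OF F L])
  moreover have "tr X (ext_so V X E \<rho>) = tr X (mult X (ext S X (so_dual V S E (idop S))) \<rho>)"
    by (simp add: tr_mult_ext_so[OF F VS SX, symmetric] ext_idop[OF SX] mult_idop_left[OF F])
  ultimately show ?thesis
    unfolding so_dual_lib_def ext_add ext_diff mult_add_left mult_diff_left tr_add tr_diff
    by (simp add: tr_mult_ext_so[OF F VS SX])
qed

lemma qform_so_dual:
  "finite S \<Longrightarrow> qform S (so_dual V S E Q) v v = tr S (mult S Q (ext_so V S E (outer S v v)))"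
  by (simp add: tr_mult_outer[symmetric] tr_mult_ext_so_self)

lemma qform_id_minus_so_dual_lib:
  "finite S \<Longrightarrow> qform S (id_minus S (so_dual_lib V S E Q)) v v
     = tr S (ext_so V S E (outer S v v)) - tr S (mult S Q (ext_so V S E (outer S v v)))"
  by (simp add: id_minus_def so_dual_lib_def qform_diff qform_so_dual mult_idop_left)

lemma psd_id_minus_so_dual:
  assumes F: "finite S" and VS: "V \<subseteq> S" and D: "DProg V E" and Q: "is_proj S Q"
  shows "psd S (id_minus S (so_dual V S E Q))"
  unfolding psd_iff
proof (intro conjI allI)
  fix v
  have \<Phi>: "psd S (ext_so V S E (outer S v v))" by (rule DProg_psd_ext_so[OF D F VS outer_psd])
  have "tr S (mult S Q (ext_so V S E (outer S v v))) \<le> tr S (ext_so V S E (outer S v v))"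
    by (rule tr_proj_mult_le[OF F Q \<Phi>])
  also have "\<dots> \<le> inprod S v v" using tr_ext_so_le[OF F D VS outer_psd] by (simp add: tr_outer)
  finally show "0 \<le> qform S (id_minus S (so_dual V S E Q)) v v"
    by (simp add: qform_id_minus[OF F] qform_so_dual[OF F])
qed (simp add: id_minus_in_L)

lemma psd_id_minus_so_dual_lib:
  assumes F: "finite S" and VS: "V \<subseteq> S" and D: "DProg V E" and Q: "is_proj S Q"
  shows "psd S (id_minus S (so_dual_lib V S E Q))"
  unfolding psd_iff
  using tr_proj_mult_le[OF F Q DProg_psd_ext_so[OF D F VS outer_psd]]
  by (simp add: id_minus_in_L qform_id_minus_so_dual_lib[OF F])


section \<open>Correctness formulae as inclusions of images\<close>

lemma fixed_if_qform_ge: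
  assumes F: "finite S" and M: "psd S (id_minus S M)" and sv: "supp_vec S v"
    and ge: "Re (inprod S v v) \<le> Re (qform S M v v)"
  shows "apply_op S M v = v"
proof -
  have "0 \<le> qform S (id_minus S M) v v" using M by (simp add: psd_iff)
  then have "qform S (id_minus S M) v v = 0"
    using ge by (simp add: qform_id_minus[OF F] less_eq_complex_def complex_eq_iff)
  then have "apply_op S (id_minus S M) v = (\<lambda>f. 0)" by (rule psd_kernel[OF F M])
  then show ?thesis using apply_id_minus[OF F sv] by (simp add: fun_eq_iff)
qed

lemma img_subset_if_tr_le:
  assumes F: "finite S" and P: "is_proj S P" and M: "psd S (id_minus S M)"
    and le: "\<And>\<rho>. dens S \<rho> \<Longrightarrow> Re (tr S (mult S P \<rho>)) \<le> Re (tr S (mult S M \<rho>))"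
  shows "img S P \<subseteq> img S M"
proof
  fix v assume "v \<in> img S P"
  then have sv: "supp_vec S v" and Pv: "apply_op S P v = v" unfolding img_def by auto
  show "v \<in> img S M"
  proof (cases "v = (\<lambda>f. 0)")
    case True
    then show ?thesis by (simp add: img_def apply_op_zero supp_vec_def)
  next
    case False
    define c where "c = inprod S v v"
    have cpos: "0 < Re c" using inprod_pos[OF F sv False] by (simp add: c_def)
    have cim: "Im c = 0" using inprod_real by (simp add: c_def)
    define \<rho> where "\<rho> = (\<lambda>f g. (1 / c) * outer S v v f g)"
    have "Re (tr S (mult S P \<rho>)) \<le> Re (tr S (mult S M \<rho>))"
      using le dens_normalized_outer[OF F sv False] unfolding \<rho>_def c_def .
    moreover have "tr S (mult S A \<rho>) = (1 / c) * qform S A v v" for A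
      unfolding \<rho>_def mult_scale_right tr_scale tr_mult_outer ..
    moreover have "qform S P v v = c" using Pv by (simp add: qform_eq_inprod c_def)
    ultimately have "1 \<le> Re ((1 / c) * qform S M v v)" using cpos by (auto simp: complex_eq_iff)
    then have "Re c \<le> Re (qform S M v v)" using cpos cim
      by (simp add: Re_divide field_simps complex_eq_iff power2_eq_square mult_le_cancel_left_pos)
    then have "apply_op S M v = v" using fixed_if_qform_ge[OF F M sv] by (simp add: c_def)
    then show ?thesis using sv unfolding img_def by simp
  qed
qed

lemma sandwich_id_minus_proj:
  assumes F: "finite X" and P: "is_proj X P" and L: "in_L X M"
    and MP: "mult X M P = P" and PM: "mult X P M = P"
  shows "mult X (mult X (id_minus X P) M) (id_minus X P) = (\<lambda>f g. M f g - P f g)"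
  unfolding id_minus_def
  by (simp add: mult_diff_left mult_diff_right mult_idop_left mult_idop_right F L MP PM
      proj_in_L[OF P] proj_idem[OF P])

text \<open>If \<open>M P = P\<close> then \<open>M = P + (I - P) M (I - P)\<close>, so the trace of \<open>M\<close> against a state
  exceeds that of \<open>P\<close> by the trace of \<open>M\<close> against a positive operator.\<close>

lemma tr_le_if_img_subset:
  assumes FX: "finite X" and SX: "S \<subseteq> X" and P: "is_proj S P" and M: "psd S (id_minus S M)"
    and inc: "img S P \<subseteq> img S M"
    and pos: "\<And>\<sigma>. psd X \<sigma> \<Longrightarrow> 0 \<le> Re (tr X (mult X (ext S X M) \<sigma>))"
    and \<rho>: "psd X \<rho>"
  shows "Re (tr X (mult X (ext S X P) \<rho>)) \<le> Re (tr X (mult X (ext S X M) \<rho>))"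
proof -
  have FS: "finite S" using finite_subset[OF SX FX] .
  have MP: "mult S M P = P" by (rule img_subset_imp_mult_eq[OF P inc])
  have PM: "mult S P M = P"
    using arg_cong[OF MP, of adj] by (simp add: adj_mult adj_proj[OF P] adj_eq_if_psd_id_minus[OF FS M])
  define Pt where "Pt = ext S X P"
  define Mt where "Mt = ext S X M"
  define Qt where "Qt = id_minus X Pt"
  have PtP: "is_proj X Pt" unfolding Pt_def by (rule ext_proj[OF FX SX P])
  have QtP: "is_proj X Qt" unfolding Qt_def by (rule id_minus_proj[OF FX PtP])
  have "mult X (mult X Qt Mt) Qt = (\<lambda>f g. Mt f g - Pt f g)"
    unfolding Qt_def Mt_def Pt_def
    by (rule sandwich_id_minus_proj[OF FX ext_proj[OF FX SX P] ext_in_L])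
      (simp_all add: mult_ext[OF FX SX] MP PM)
  then have Mt: "Mt = (\<lambda>f g. Pt f g + mult X (mult X Qt Mt) Qt f g)" by simp
  have "tr X (mult X (mult X (mult X Qt Mt) Qt) \<rho>) = tr X (mult X Mt (mult X (mult X Qt \<rho>) (adj Qt)))"
    by (metis adj_proj[OF QtP] mult_assoc tr_mult_comm)
  then have "tr X (mult X Mt \<rho>) = tr X (mult X Pt \<rho>) + tr X (mult X Mt (mult X (mult X Qt \<rho>) (adj Qt)))"
    by (subst Mt) (simp add: mult_add_left tr_add)
  then show ?thesis using pos[OF psd_sandwich[OF \<rho>]] unfolding Mt_def Pt_def by simp
qed

lemma sat_tot_iff:
  assumes F: "finite S" and VS: "V \<subseteq> S" and D: "DProg V E" and Q: "is_proj S Q" and P: "is_proj S P"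
  shows "sat_tot V S E P Q \<longleftrightarrow> img S P \<subseteq> img S (so_dual V S E Q)"
proof
  assume sat: "sat_tot V S E P Q"
  show "img S P \<subseteq> img S (so_dual V S E Q)"
  proof (rule img_subset_if_tr_le[OF F P psd_id_minus_so_dual[OF F VS D Q]])
    fix \<rho> assume "dens S \<rho>"
    have "Re (tr S (mult S (ext S S P) \<rho>)) \<le> Re (tr S (mult S (ext S S Q) (ext_so V S E \<rho>)))"
      by (rule sat[unfolded sat_tot_def, rule_format, OF F _ \<open>dens S \<rho>\<close>]) (use VS in auto)
    then show "Re (tr S (mult S P \<rho>)) \<le> Re (tr S (mult S (so_dual V S E Q) \<rho>))"
      by (simp add: tr_mult_ext_so[OF F VS order_refl] ext_self proj_in_L[OF P])
  qed
next
  assume inc: "img S P \<subseteq> img S (so_dual V S E Q)"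
  show "sat_tot V S E P Q"
    unfolding sat_tot_def
  proof (intro allI impI)
    fix X \<rho> assume FX: "finite X" and VSX: "V \<union> S \<subseteq> X" and "dens X \<rho>"
    then have SX: "S \<subseteq> X" and VX: "V \<subseteq> X" and \<rho>: "psd X \<rho>" by (auto simp: dens_def)
    have "0 \<le> Re (tr X (mult X (ext S X (so_dual V S E Q)) \<sigma>))" if "psd X \<sigma>" for \<sigma>
      using tr_proj_mult_nonneg[OF FX ext_proj[OF FX SX Q] DProg_psd_ext_so[OF D FX VX that]]
      by (simp add: tr_mult_ext_so[OF FX VS SX] complex_nonneg_iff)
    then show "Re (tr X (mult X (ext S X P) \<rho>)) \<le> Re (tr X (mult X (ext S X Q) (ext_so V X E \<rho>)))"
      using tr_le_if_img_subset[OF FX SX P psd_id_minus_so_dual[OF F VS D Q] inc _ \<rho>]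
      by (simp add: tr_mult_ext_so[OF FX VS SX])
  qed
qed

lemma sat_par_iff:
  assumes F: "finite S" and VS: "V \<subseteq> S" and D: "DProg V E" and Q: "is_proj S Q" and P: "is_proj S P"
  shows "sat_par V S E P Q \<longleftrightarrow> img S P \<subseteq> img S (so_dual_lib V S E Q)"
proof
  assume sat: "sat_par V S E P Q"
  show "img S P \<subseteq> img S (so_dual_lib V S E Q)"
  proof (rule img_subset_if_tr_le[OF F P psd_id_minus_so_dual_lib[OF F VS D Q]])
    fix \<rho> assume \<rho>: "dens S \<rho>"
    have "Re (tr S (mult S (ext S S P) \<rho>)) \<le> Re (tr S (mult S (ext S S Q) (ext_so V S E \<rho>)))
        + Re (tr S \<rho>) - Re (tr S (ext_so V S E \<rho>))"
      by (rule sat[unfolded sat_par_def, rule_format, OF F _ \<rho>]) (use VS in auto)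
    then show "Re (tr S (mult S P \<rho>)) \<le> Re (tr S (mult S (so_dual_lib V S E Q) \<rho>))"
      using \<rho> arg_cong[OF tr_mult_ext_so_lib[OF F VS order_refl, of \<rho> Q E], of Re]
      by (simp add: ext_self proj_in_L[OF P] dens_def psd_iff)
  qed
next
  assume inc: "img S P \<subseteq> img S (so_dual_lib V S E Q)"
  show "sat_par V S E P Q"
    unfolding sat_par_def
  proof (intro allI impI)
    fix X \<rho> assume FX: "finite X" and VSX: "V \<union> S \<subseteq> X" and "dens X \<rho>"
    then have SX: "S \<subseteq> X" and VX: "V \<subseteq> X" and \<rho>: "psd X \<rho>" by (auto simp: dens_def)
    have "0 \<le> Re (tr X (mult X (ext S X (so_dual_lib V S E Q)) \<sigma>))" if \<sigma>: "psd X \<sigma>" for \<sigma>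
    proof -
      have "0 \<le> tr X (mult X (ext S X Q) (ext_so V X E \<sigma>))"
        by (rule tr_proj_mult_nonneg[OF FX ext_proj[OF FX SX Q] DProg_psd_ext_so[OF D FX VX \<sigma>]])
      moreover have "tr X (ext_so V X E \<sigma>) \<le> tr X \<sigma>" by (rule tr_ext_so_le[OF FX D VX \<sigma>])
      ultimately show ?thesis
        using \<sigma> by (simp add: tr_mult_ext_so_lib[OF FX VS SX, symmetric] psd_iff less_eq_complex_def)
    qed
    then show "Re (tr X (mult X (ext S X P) \<rho>)) \<le> Re (tr X (mult X (ext S X Q) (ext_so V X E \<rho>)))
        + Re (tr X \<rho>) - Re (tr X (ext_so V X E \<rho>))"
      using tr_le_if_img_subset[OF FX SX P psd_id_minus_so_dual_lib[OF F VS D Q] inc _ \<rho>] \<rho>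
      by (simp add: tr_mult_ext_so_lib[OF FX VS SX, symmetric] psd_iff)
  qed
qed


section \<open>Weakest preconditions and strongest postconditions\<close>

lemma apply_so_dual_lib:
  "finite S \<Longrightarrow> supp_vec S v \<Longrightarrow> apply_op S (so_dual_lib V S E Q) v
     = (\<lambda>f. apply_op S (so_dual V S E Q) v f + v f - apply_op S (so_dual V S E (idop S)) v f)"
  by (subst apply_idop[symmetric], assumption+)
    (intro ext, simp add: so_dual_lib_def apply_op_def algebra_simps sum.distrib sum_subtractf)

lemma img_so_dual_eq_inter:
  assumes F: "finite S" and VS: "V \<subseteq> S" and D: "DProg V E" and Q: "is_proj S Q"
  shows "img S (so_dual V S E Q) = img S (so_dual_lib V S E Q) \<inter> img S (so_dual V S E (idop S))"
proof (intro equalityI subsetI)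
  fix v assume "v \<in> img S (so_dual V S E Q)"
  then have sv: "supp_vec S v" and fixQ: "apply_op S (so_dual V S E Q) v = v" unfolding img_def by auto
  have "0 \<le> qform S (id_minus S (so_dual_lib V S E Q)) v v"
    using psd_id_minus_so_dual_lib[OF F VS D Q] by (simp add: psd_iff)
  then have "Re (inprod S v v) \<le> Re (qform S (so_dual V S E (idop S)) v v)"
    using fixQ by (simp add: id_minus_def so_dual_lib_def qform_diff qform_eq_inprod less_eq_complex_def)
  then have fixI: "apply_op S (so_dual V S E (idop S)) v = v"
    by (rule fixed_if_qform_ge[OF F psd_id_minus_so_dual[OF F VS D idop_proj[OF F]] sv])
  then have "apply_op S (so_dual_lib V S E Q) v = v" using apply_so_dual_lib[OF F sv] fixQ by simp
  then show "v \<in> img S (so_dual_lib V S E Q) \<inter> img S (so_dual V S E (idop S))"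
    using fixI sv unfolding img_def by simp
next
  fix v assume "v \<in> img S (so_dual_lib V S E Q) \<inter> img S (so_dual V S E (idop S))"
  then have sv: "supp_vec S v" and "apply_op S (so_dual_lib V S E Q) v = v"
    and "apply_op S (so_dual V S E (idop S)) v = v" unfolding img_def by auto
  then have "apply_op S (so_dual V S E Q) v = v" using apply_so_dual_lib[OF F sv] by (simp add: fun_eq_iff)
  then show "v \<in> img S (so_dual V S E Q)" using sv unfolding img_def by simp
qed

text \<open>\<open>v\<close> is a fixed point of \<open>E\<^sup>\<dagger>_lib(R)\<close> iff the output state \<open>E(|v\<rangle>\<langle>v|)\<close> lies in \<open>R\<close>.\<close>

lemma fixed_so_dual_lib_iff:
  assumes F: "finite S" and VS: "V \<subseteq> S" and D: "DProg V E" and R: "is_proj S R" and sv: "supp_vec S v"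
  shows "apply_op S (so_dual_lib V S E R) v = v
     \<longleftrightarrow> tr S (mult S (id_minus S R) (ext_so V S E (outer S v v))) = 0"
proof -
  have "qform S (id_minus S (so_dual_lib V S E R)) v v
      = tr S (mult S (id_minus S R) (ext_so V S E (outer S v v)))"
    unfolding qform_id_minus_so_dual_lib[OF F]
    by (simp add: id_minus_def mult_diff_left tr_diff mult_idop_left[OF F])
  moreover have "qform S (id_minus S (so_dual_lib V S E R)) v v = 0 \<longleftrightarrow> apply_op S (so_dual_lib V S E R) v = v"
  proof
    assume "qform S (id_minus S (so_dual_lib V S E R)) v v = 0"
    then have "apply_op S (id_minus S (so_dual_lib V S E R)) v = (\<lambda>f. 0)"
      by (rule psd_kernel[OF F psd_id_minus_so_dual_lib[OF F VS D R]])
    then show "apply_op S (so_dual_lib V S E R) v = v" by (simp add: apply_id_minus[OF F sv] fun_eq_iff)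
  qed (simp add: qform_id_minus[OF F] qform_eq_inprod[of S "so_dual_lib V S E R"])
  ultimately show ?thesis by simp
qed

text \<open>The strongest postcondition of \<open>P\<close> is the complement of the common kernel \<open>H\<close> of the
  output states \<open>E(|v\<rangle>\<langle>v|)\<close>, \<open>v \<in> P\<close>.\<close>

lemma least_proj_fixing:
  assumes F: "finite S" and VS: "V \<subseteq> S" and D: "DProg V E" and Ps: "is_proj S Ps"
  shows "\<exists>R0. is_proj S R0 \<and>
    (\<forall>R. is_proj S R \<longrightarrow> (pleq S R0 R \<longleftrightarrow> img S Ps \<subseteq> img S (so_dual_lib V S E R)))"
proof -
  define A where "A v = ext_so V S E (outer S v v)" for v
  have A: "psd S (A v)" for v unfolding A_def by (rule DProg_psd_ext_so[OF D F VS outer_psd])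
  define H where "H = {y. supp_vec S y \<and> (\<forall>v\<in>img S Ps. apply_op S (A v) y = (\<lambda>f. 0))}"
  have "is_subspace S H"
    unfolding is_subspace_def H_def by (auto simp: apply_op_lin apply_op_zero supp_vec_def)
  then obtain PH where PH: "is_proj S PH" "img S PH = H" using subspace_is_img_proj[OF F] by blast
  have "pleq S (id_minus S PH) R \<longleftrightarrow> img S Ps \<subseteq> img S (so_dual_lib V S E R)" if R: "is_proj S R" for R
  proof -
    have "pleq S (id_minus S PH) R \<longleftrightarrow> img S (id_minus S R) \<subseteq> H"
      using pleq_iff_img_id_minus[OF F id_minus_proj[OF F PH(1)] R] PH
      by (simp add: id_minus_id_minus proj_in_L)
    also have "\<dots> \<longleftrightarrow> (\<forall>v\<in>img S Ps. tr S (mult S (id_minus S R) (A v)) = 0)"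
      using tr_proj_mult_eq_0_iff[OF F id_minus_proj[OF F R] A] unfolding H_def img_def by auto
    also have "\<dots> \<longleftrightarrow> (\<forall>v\<in>img S Ps. apply_op S (so_dual_lib V S E R) v = v)"
      using fixed_so_dual_lib_iff[OF F VS D R] unfolding A_def img_def by auto
    also have "\<dots> \<longleftrightarrow> img S Ps \<subseteq> img S (so_dual_lib V S E R)"
      unfolding img_def by auto
    finally show ?thesis .
  qed
  then show ?thesis using id_minus_proj[OF F PH(1)] by blast
qed

lemma the_greatest_proj_eq:
  assumes "is_proj X P0" and "\<And>P. is_proj X P \<Longrightarrow> Pr P \<longleftrightarrow> img X P \<subseteq> img X P0"
  shows "(THE P. is_proj X P \<and> Pr P \<and> (\<forall>P'. is_proj X P' \<and> Pr P' \<longrightarrow> pleq X P' P)) = P0"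
  by (rule the_proj_eqI) (use assms in \<open>auto simp: pleq_def\<close>)

lemma the_least_proj_eq:
  assumes "is_proj X P0" and "\<And>P. is_proj X P \<Longrightarrow> Pr P \<longleftrightarrow> pleq X P0 P"
  shows "(THE P. is_proj X P \<and> Pr P \<and> (\<forall>P'. is_proj X P' \<and> Pr P' \<longrightarrow> pleq X P P')) = P0"
  by (rule the_proj_eqI) (use assms in \<open>auto simp: pleq_def\<close>)

lemma wp_char:
  assumes FV: "finite V" and FU: "finite U" and D: "DProg V E" and Q: "is_proj U Q"
  shows "is_proj (V \<union> U) (wp V U E Q)"
    and "img (V \<union> U) (wp V U E Q) = img (V \<union> U) (so_dual V (V \<union> U) E (ext U (V \<union> U) Q))"
proof -
  let ?S = "V \<union> U"
  have F: "finite ?S" using FV FU by simp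
  obtain P0 where P0: "is_proj ?S P0" "img ?S P0 = img ?S (so_dual V ?S E (ext U ?S Q))"
    using subspace_is_img_proj[OF F img_is_subspace] by blast
  have "wp V U E Q = P0"
    unfolding wp_def
    by (rule the_greatest_proj_eq[OF P0(1)]) (simp add: sat_tot_iff[OF F _ D ext_proj[OF F _ Q]] P0(2))
  then show "is_proj ?S (wp V U E Q)" "img ?S (wp V U E Q) = img ?S (so_dual V ?S E (ext U ?S Q))"
    using P0 by simp_all
qed

lemma wlp_char:
  assumes FV: "finite V" and FU: "finite U" and D: "DProg V E" and Q: "is_proj U Q"
  shows "is_proj (V \<union> U) (wlp V U E Q)"
    and "img (V \<union> U) (wlp V U E Q) = img (V \<union> U) (so_dual_lib V (V \<union> U) E (ext U (V \<union> U) Q))"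
proof -
  let ?S = "V \<union> U"
  have F: "finite ?S" using FV FU by simp
  obtain P0 where P0: "is_proj ?S P0" "img ?S P0 = img ?S (so_dual_lib V ?S E (ext U ?S Q))"
    using subspace_is_img_proj[OF F img_is_subspace] by blast
  have "wlp V U E Q = P0"
    unfolding wlp_def
    by (rule the_greatest_proj_eq[OF P0(1)]) (simp add: sat_par_iff[OF F _ D ext_proj[OF F _ Q]] P0(2))
  then show "is_proj ?S (wlp V U E Q)" "img ?S (wlp V U E Q) = img ?S (so_dual_lib V ?S E (ext U ?S Q))"
    using P0 by simp_all
qed

lemma sp_char:
  assumes FV: "finite V" and FU: "finite U" and D: "DProg V E" and P: "is_proj U P"
  shows "is_proj (V \<union> U) (sp V U E P)"
    and "is_proj (V \<union> U) R \<Longrightarrow> pleq (V \<union> U) (sp V U E P) R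
           \<longleftrightarrow> img (V \<union> U) (ext U (V \<union> U) P) \<subseteq> img (V \<union> U) (so_dual_lib V (V \<union> U) E R)"
proof -
  let ?S = "V \<union> U"
  have F: "finite ?S" using FV FU by simp
  have Ps: "is_proj ?S (ext U ?S P)" by (rule ext_proj[OF F _ P]) simp
  obtain R0 where R0: "is_proj ?S R0"
    "\<And>R. is_proj ?S R \<Longrightarrow> pleq ?S R0 R \<longleftrightarrow> img ?S (ext U ?S P) \<subseteq> img ?S (so_dual_lib V ?S E R)"
    using least_proj_fixing[OF F _ D Ps] by auto
  have "sp V U E P = R0"
    unfolding sp_def by (rule the_least_proj_eq[OF R0(1)]) (simp add: sat_par_iff[OF F _ D _ Ps] R0(2))
  then show "is_proj ?S (sp V U E P)"
    and "is_proj ?S R \<Longrightarrow> pleq ?S (sp V U E P) R \<longleftrightarrow> img ?S (ext U ?S P) \<subseteq> img ?S (so_dual_lib V ?S E R)"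
    using R0 by simp_all
qed

lemma img_wp_self:
  assumes "finite S" "V \<subseteq> S" "DProg V E" "is_proj S R"
  shows "img S (wp V S E R) = img S (so_dual V S E R)"
  using wp_char(2)[OF finite_subset[OF assms(2,1)] assms(1,3,4)] assms(2)
  by (simp add: Un_absorb1 ext_self proj_in_L[OF assms(4)])

lemma img_wlp_self:
  assumes "finite S" "V \<subseteq> S" "DProg V E" "is_proj S R"
  shows "img S (wlp V S E R) = img S (so_dual_lib V S E R)"
  using wlp_char(2)[OF finite_subset[OF assms(2,1)] assms(1,3,4)] assms(2)
  by (simp add: Un_absorb1 ext_self proj_in_L[OF assms(4)])

lemma sp_self_le_iff:
  assumes "finite S" "V \<subseteq> S" "DProg V E" "is_proj S R" "is_proj S R'"
  shows "pleq S (sp V S E R) R' \<longleftrightarrow> img S R \<subseteq> img S (so_dual_lib V S E R')"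
  using sp_char(2)[OF finite_subset[OF assms(2,1)] assms(1,3,4), of R'] assms(2,5)
  by (simp add: Un_absorb1 ext_self proj_in_L[OF assms(4)])

theorem theorem4p9:
  fixes V W :: "qvar set" and E :: superop and P Q :: op
  assumes "finite V" and "DProg V E" and "finite W"
    and "is_proj W P" and "is_proj W Q"
  shows "pleq (V \<union> W) (sp V (V \<union> W) E (wlp V W E Q)) (ext W (V \<union> W) Q)
       \<and> pleq (V \<union> W) (ext W (V \<union> W) P) (wlp V (V \<union> W) E (sp V W E P))
       \<and> wp V W E Q = pmeet (V \<union> W) (wlp V W E Q) (wp V W E (idop W))
       \<and> pleq (V \<union> W) (sp V (V \<union> W) E (wp V W E Q)) (ext W (V \<union> W) Q)
       \<and> (pleq (V \<union> W) (ext W (V \<union> W) P) (wp V W E (idop W)) \<longrightarrow>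
            pleq (V \<union> W) (ext W (V \<union> W) P) (wp V (V \<union> W) E (sp V W E P)))"
proof -
  note FV = assms(1) and D = assms(2) and FW = assms(3) and P = assms(4) and Q = assms(5)
  define S where "S = V \<union> W"
  have F: "finite S" and VS: "V \<subseteq> S" and WS: "W \<subseteq> S" using FV FW by (auto simp: S_def)
  have Qs: "is_proj S (ext W S Q)" by (rule ext_proj[OF F WS Q])
  note wp = wp_char[OF FV FW D, folded S_def] and wlp = wlp_char[OF FV FW D, folded S_def]
    and sp = sp_char[OF FV FW D, folded S_def] and meet = img_so_dual_eq_inter[OF F VS D]
  have wpI: "img S (wp V W E (idop W)) = img S (so_dual V S E (idop S))"
    using wp(2)[OF idop_proj[OF FW]] by (simp add: ext_idop[OF WS])
  have "pleq S (sp V S E (wlp V W E Q)) (ext W S Q)"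
    using sp_self_le_iff[OF F VS D wlp(1)[OF Q] Qs] wlp(2)[OF Q] by simp
  moreover have "pleq S (ext W S P) (wlp V S E (sp V W E P))"
    using sp(2)[OF P sp(1)[OF P]] img_wlp_self[OF F VS D sp(1)[OF P]] by (simp add: pleq_def)
  moreover have "wp V W E Q = pmeet S (wlp V W E Q) (wp V W E (idop W))"
    by (rule pmeet_eq[OF wp(1)[OF Q], symmetric]) (simp add: wp(2)[OF Q] wlp(2)[OF Q] wpI meet[OF Qs])
  moreover have "pleq S (sp V S E (wp V W E Q)) (ext W S Q)"
    using sp_self_le_iff[OF F VS D wp(1)[OF Q] Qs] wp(2)[OF Q] meet[OF Qs] by auto
  moreover have "pleq S (ext W S P) (wp V S E (sp V W E P))" if "pleq S (ext W S P) (wp V W E (idop W))"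
    using that sp(2)[OF P sp(1)[OF P]] img_wp_self[OF F VS D sp(1)[OF P]] meet[OF sp(1)[OF P]] wpI
    by (auto simp: pleq_def)
  ultimately show ?thesis unfolding S_def by blast
qed

end
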